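(* Let $x=p/q$ with $\gcd(p,q)=1$, $q\in\mathbb N$, and let $\{y_n\}_{n\in\mathbb N}$ be positive numbers. (1) If $y_n=c/n^2$ for a constant $c>0$, then for any $m\in\mathbb N_q$ and any $\Psi\in C_c^\infty(\mathcal M)$, $$\lim_{\substack{n\to\infty\\ \gcd(n,q)=1}}\delta^{\rm pr}_{n,x,y_n}(\Psi)=\mu_{\frac{1}{cq^2}}(\Psi)\quad\text{and}\quad \lim_{\substack{n\to\infty\\ n\in\mathbb P_m}}\delta_{n,x,y_n}(\Psi)=\nu_{m,\frac{\gcd(m,q)^2}{cq^2}}(\Psi).$$ (2) If $\lim_{n\to\infty}n^2y_n=0$, then both sequences $\{\mathcal R_n(x,y_n)\}_{n\in\mathbb N}$ and $\{\mathcal R_n^{\rm pr}(x,y_n)\}_{n\in\mathbb N}$ fully escape to the cusp of $\mathcal M$, i.e. for every compact $K\subset\mathcal M$, $\mathcal R_n(x,y_n)\cap K=\emptyset$ (and hence $\mathcal R^{\rm pr}_n(x,y_n)\cap K=\emptyset$) for all sufficiently large $n$.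
   Context: $\mathcal M=\Gamma\backslash\mathbb H$ with $\Gamma=\mathrm{SL}_2(\mathbb Z)$. For $n\in\mathbb N$, $x\in\mathbb R/\mathbb Z$, $y>0$: $\mathcal R_n(x,y)=\{\Gamma(x+\tfrac jn+iy):0\le j\le n-1\}$, $\mathcal R^{\rm pr}_n(x,y)=\{\Gamma(x+\tfrac jn+iy):j\in(\mathbb Z/n\mathbb Z)^\times\}$; $\delta_{n,x,y}(\Psi)=\frac1n\sum_{j=0}^{n-1}\Psi(\Gamma(x+\tfrac jn+iy))$, $\delta^{\rm pr}_{n,x,y}(\Psi)=\frac1{\varphi(n)}\sum_{j\in(\mathbb Z/n\mathbb Z)^\times}\Psi(\Gamma(x+\tfrac jn+iy))$. $\mathbb N_q=\{n\in\mathbb N:\gcd(n^2,q)\mid n\}$. For $m\in\mathbb N$, $\mathbb P_m=\{n=m\ell:\ \ell\text{ prime},\ \ell\nmid m\}$. For $Y>0$, $\mu_Y$ is the uniform probability measure on the closed horocycle $\{\Gamma(t+iY):t\in\mathbb R/\mathbb Z\}$, i.e. $\mu_Y(\Psi)=\int_0^1\Psi(t+iY)\,dt$, and $\nu_{m,Y}=\frac1m\sum_{d\mid m}\varphi(\tfrac md)\mu_{d^2Y}$. *)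

theory Defs
  imports "HOL-Analysis.Analysis" "HOL-Number_Theory.Number_Theory"
begin

definition upper :: "complex set" where
  "upper = {z. Im z > 0}"

definition SL2Z :: "(int \<times> int \<times> int \<times> int) set" where
  "SL2Z = {(a, b, c, d). a * d - b * c = 1}"

definition moeb :: "int \<times> int \<times> int \<times> int \<Rightarrow> complex \<Rightarrow> complex" where
  "moeb g z = (case g of (a, b, c, d) \<Rightarrow>
      (of_int a * z + of_int b) / (of_int c * z + of_int d))"

text \<open>Gamma-saturation of a subset of the upper half-plane (preimage in H of its image in M).\<close>
definition gamma_orbit :: "complex set \<Rightarrow> complex set" where
  "gamma_orbit C = {moeb g z | g z. g \<in> SL2Z \<and> z \<in> C}"

text \<open>Functions on M are Gamma-invariant functions on H.\<close>
definition gamma_invariant :: "(complex \<Rightarrow> complex) \<Rightarrow> bool" where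
  "gamma_invariant f \<longleftrightarrow> (\<forall>g\<in>SL2Z. \<forall>z\<in>upper. f (moeb g z) = f z)"

text \<open>C-infinity on H (viewed as an open subset of R^2): there is a family of functions containing f,
  all continuous on H, closed under taking the partial derivatives in the directions 1 and i.\<close>
definition smooth_on_upper :: "(complex \<Rightarrow> complex) \<Rightarrow> bool" where
  "smooth_on_upper f \<longleftrightarrow> (\<exists>F. f \<in> F \<and> (\<forall>g\<in>F. continuous_on upper g) \<and>
      (\<forall>g\<in>F. \<forall>v\<in>{1, \<i>}. \<exists>g'\<in>F. \<forall>z\<in>upper.
          ((\<lambda>t::real. g (z + of_real t * v)) has_vector_derivative g' z) (at 0)))"

text \<open>Psi in C_c^infinity(M): Gamma-invariant, smooth, and its support lies in the image in M of a
  compact subset of H (i.e. has compact support in M).\<close>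
definition Cc_smooth_M :: "(complex \<Rightarrow> complex) \<Rightarrow> bool" where
  "Cc_smooth_M f \<longleftrightarrow> gamma_invariant f \<and> smooth_on_upper f \<and>
      (\<exists>C. compact C \<and> C \<subseteq> upper \<and> (\<forall>z\<in>upper. f z \<noteq> 0 \<longrightarrow> z \<in> gamma_orbit C))"

definition delta :: "nat \<Rightarrow> real \<Rightarrow> real \<Rightarrow> (complex \<Rightarrow> complex) \<Rightarrow> complex" where
  "delta n x y f = (1 / of_nat n) * (\<Sum>j<n. f (Complex (x + real j / real n) y))"

definition delta_pr :: "nat \<Rightarrow> real \<Rightarrow> real \<Rightarrow> (complex \<Rightarrow> complex) \<Rightarrow> complex" where
  "delta_pr n x y f = (1 / of_nat (totient n)) *
      (\<Sum>j\<in>{j. j < n \<and> coprime j n}. f (Complex (x + real j / real n) y))"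

definition mu :: "real \<Rightarrow> (complex \<Rightarrow> complex) \<Rightarrow> complex" where
  "mu Y f = integral {0..1} (\<lambda>t. f (Complex t Y))"

definition nu :: "nat \<Rightarrow> real \<Rightarrow> (complex \<Rightarrow> complex) \<Rightarrow> complex" where
  "nu m Y f = (1 / of_nat m) *
      (\<Sum>d\<in>{d. d dvd m}. of_nat (totient (m div d)) * mu (real d ^ 2 * Y) f)"

definition Nq :: "nat \<Rightarrow> nat set" where
  "Nq q = {n. n \<ge> 1 \<and> gcd (n ^ 2) q dvd n}"

definition Pm :: "nat \<Rightarrow> nat set" where
  "Pm m = {m * l | l. prime l \<and> \<not> l dvd m}"

text \<open>Representatives in H of the points of R_n(x,y) and R^pr_n(x,y).\<close>
definition Rn :: "nat \<Rightarrow> real \<Rightarrow> real \<Rightarrow> complex set" where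
  "Rn n x y = {Complex (x + real j / real n) y | j. j < n}"

definition Rn_pr :: "nat \<Rightarrow> real \<Rightarrow> real \<Rightarrow> complex set" where
  "Rn_pr n x y = {Complex (x + real j / real n) y | j. j < n \<and> coprime j n}"

text \<open>A sequence of finite subsets of M fully escapes to the cusp: for every compact K in M
  (= image of a compact C in H) the sets are eventually disjoint from K.\<close>
definition escapes_to_cusp :: "(nat \<Rightarrow> complex set) \<Rightarrow> bool" where
  "escapes_to_cusp R \<longleftrightarrow> (\<forall>C. compact C \<and> C \<subseteq> upper \<longrightarrow>
      (\<forall>\<^sub>F n in sequentially. gamma_orbit (R n) \<inter> gamma_orbit C = {}))"

end

(*
  For x = a/b, the point x + j/N + i c/N^2 equals (aN + jb)/(bN) + i c/N^2, and the element of
  SL2(Z) with bottom row (bN, -(aN + jb)) carries it to A/(bN) + i/(c b^2), where A is minus an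
  inverse of aN + jb modulo bN. As j runs over the units modulo N, A runs over the units in a fixed
  residue class modulo b, so delta_pr is an average of Psi over a progression on the closed
  horocycle of height 1/(c b^2). Inclusion-exclusion over the prime factors of N splits it into
  2^omega(N) Riemann sums, each within the Lipschitz constant of Psi of its integral, and
  2^omega(N)/phi(N) tends to 0.

  For n = m l in P_m, the Chinese remainder theorem writes delta_n as the mean over alpha < m of
  primitive averages of level l at the points x + alpha/m; their reduced denominators
  q m / gcd(p m + alpha q, q m) produce the heights in nu.

  If n^2 y_n tends to 0, then every Gamma-translate of a point with denominator B and height y has
  height at most B^2 y or at least 1/(B^2 y), so the points leave every compact set.
*)

theory Submission
  imports Defs "HOL-Library.Periodic_Fun"
begin

section \<open>The action of SL2(Z) on the upper half-plane\<close>

definition sl2_mult :: "int \<times> int \<times> int \<times> int \<Rightarrow> int \<times> int \<times> int \<times> int \<Rightarrow> int \<times> int \<times> int \<times> int" where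
  "sl2_mult g h = (case g of (a, b, c, d) \<Rightarrow> case h of (a', b', c', d') \<Rightarrow>
     (a * a' + b * c', a * b' + b * d', c * a' + d * c', c * b' + d * d'))"

definition sl2_inv :: "int \<times> int \<times> int \<times> int \<Rightarrow> int \<times> int \<times> int \<times> int" where
  "sl2_inv g = (case g of (a, b, c, d) \<Rightarrow> (d, -b, -c, a))"

lemma Im_moeb:
  "Im (moeb (a, b, c, d) z) = of_int (a * d - b * c) * Im z / (cmod (of_int c * z + of_int d))\<^sup>2"
proof -
  obtain r y where z: "z = Complex r y" by (metis complex_surj)
  have "(cmod (of_int c * z + of_int d))\<^sup>2 = (of_int c * r + of_int d)\<^sup>2 + (of_int c * y)\<^sup>2"
    unfolding cmod_power2 z by simp
  then show ?thesis unfolding moeb_def z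
    by (simp add: Im_divide power2_eq_square algebra_simps)
qed

lemma moeb_denominator_nonzero:
  assumes "(a, b, c, d) \<in> SL2Z" "Im z > 0"
  shows "of_int c * z + of_int d \<noteq> 0"
proof
  assume den: "of_int c * z + of_int d = 0"
  then have "Im (of_int c * z + of_int d) = 0" by simp
  then have "c = 0" using assms(2) by simp
  with den assms(1) show False by (simp add: SL2Z_def)
qed

lemma Im_moeb_SL2Z:
  "(a, b, c, d) \<in> SL2Z \<Longrightarrow> Im (moeb (a, b, c, d) z) = Im z / (cmod (of_int c * z + of_int d))\<^sup>2"
  using Im_moeb[of a b c d z] by (simp add: SL2Z_def)

lemma sl2_mult_in_SL2Z: "g \<in> SL2Z \<Longrightarrow> h \<in> SL2Z \<Longrightarrow> sl2_mult g h \<in> SL2Z"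
  by (cases g; cases h) (auto simp: SL2Z_def sl2_mult_def algebra_simps)

lemma sl2_inv_in_SL2Z: "g \<in> SL2Z \<Longrightarrow> sl2_inv g \<in> SL2Z"
  by (cases g) (auto simp: SL2Z_def sl2_inv_def algebra_simps)

lemma moebius_of_quotient:
  fixes a b c d u v :: "'a :: field"
  assumes "v \<noteq> 0"
  shows "(a * (u / v) + b) / (c * (u / v) + d) = (a * u + b * v) / (c * u + d * v)"
proof -
  have "a * (u / v) + b = (a * u + b * v) / v" "c * (u / v) + d = (c * u + d * v) / v"
    using assms by (simp_all add: field_simps)
  then show ?thesis using assms by simp
qed

lemma moeb_sl2_mult:
  assumes "h \<in> SL2Z" "z \<in> upper"
  shows "moeb g (moeb h z) = moeb (sl2_mult g h) z"
proof -
  obtain a b c d a' b' c' d' where gh: "g = (a, b, c, d)" "h = (a', b', c', d')"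
    by (cases g; cases h) auto
  have "of_int c' * z + of_int d' \<noteq> 0"
    using assms moeb_denominator_nonzero gh by (auto simp: upper_def)
  then have "moeb g (moeb h z) = (of_int a * (of_int a' * z + of_int b') + of_int b * (of_int c' * z + of_int d'))
      / (of_int c * (of_int a' * z + of_int b') + of_int d * (of_int c' * z + of_int d'))"
    unfolding gh moeb_def prod.case by (rule moebius_of_quotient)
  then show ?thesis
    unfolding gh moeb_def sl2_mult_def by (simp add: algebra_simps)
qed

lemma moeb_sl2_inv:
  assumes "g \<in> SL2Z" "z \<in> upper"
  shows "moeb (sl2_inv g) (moeb g z) = z"
proof -
  have "sl2_mult (sl2_inv g) g = (1, 0, 0, 1)"
    using assms(1) by (cases g) (auto simp: SL2Z_def sl2_inv_def sl2_mult_def algebra_simps)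
  then show ?thesis
    using assms moeb_sl2_mult by (simp add: moeb_def)
qed

lemma gamma_orbits_meet:
  assumes "gamma_orbit A \<inter> gamma_orbit B \<noteq> {}" "A \<subseteq> upper" "B \<subseteq> upper"
  obtains h z where "h \<in> SL2Z" "z \<in> A" "moeb h z \<in> B"
proof -
  obtain g z g' w where *: "g \<in> SL2Z" "z \<in> A" "g' \<in> SL2Z" "w \<in> B" "moeb g z = moeb g' w"
    using assms(1) unfolding gamma_orbit_def by blast
  then have "w = moeb (sl2_inv g') (moeb g z)"
    using moeb_sl2_inv[of g' w] assms(3) by auto
  also have "\<dots> = moeb (sl2_mult (sl2_inv g') g) z"
    using * assms(2) by (intro moeb_sl2_mult) auto
  finally show ?thesis
    using that * sl2_mult_in_SL2Z sl2_inv_in_SL2Z by metis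
qed

lemma gamma_orbit_mono: "A \<subseteq> B \<Longrightarrow> gamma_orbit A \<subseteq> gamma_orbit B"
  unfolding gamma_orbit_def by blast

lemma gamma_orbit_eq_UN: "gamma_orbit A = (\<Union>z\<in>A. gamma_orbit {z})"
  unfolding gamma_orbit_def by blast

lemma gamma_invariant_translate:
  assumes "gamma_invariant f" "Im z > 0"
  shows "f (z + of_int k) = f z"
proof -
  have "(1, k, 0, 1) \<in> SL2Z" by (simp add: SL2Z_def)
  moreover have "moeb (1, k, 0, 1) z = z + of_int k" by (simp add: moeb_def)
  ultimately show ?thesis
    using assms unfolding gamma_invariant_def upper_def by force
qed

lemma moeb_rational_point:
  fixes a b A B :: int and y :: real
  assumes "b > 0" "y > 0" "A * a + B * b = -1"
  shows "(A, B, b, -a) \<in> SL2Z"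
    and "moeb (A, B, b, -a) (Complex (of_int a / of_int b) y)
           = Complex (of_int A / of_int b) (1 / (of_int b ^ 2 * y))"
proof -
  show "(A, B, b, -a) \<in> SL2Z" using assms(3) by (simp add: SL2Z_def algebra_simps)
  define z where "z = Complex (of_int a / of_int b) y"
  define w where "w = Complex (of_int A / of_int b) (1 / (of_int b ^ 2 * y))"
  have den: "of_int b * z - of_int a = \<i> * of_real (of_int b * y)"
    using assms(1) by (simp add: z_def complex_eq_iff)
  have "of_int A * real_of_int a + of_int B * of_int b = -1"
    using assms(3) by (metis of_int_add of_int_minus of_int_mult of_int_1)
  then have "of_int A * z + of_int B = w * (of_int b * z - of_int a)"
    unfolding den using assms by (simp add: z_def w_def complex_eq_iff field_simps power2_eq_square)
  moreover have "of_int b * z - of_int a \<noteq> 0" using den assms by simp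
  ultimately show "moeb (A, B, b, -a) z = w" by (simp add: moeb_def field_simps)
qed

lemma gamma_invariant_rational_point:
  fixes a A b :: int and y :: real
  assumes "gamma_invariant f" "b > 0" "y > 0" "[a * A = -1] (mod b)"
  shows "f (Complex (of_int a / of_int b) y) = f (Complex (of_int A / of_int b) (1 / (of_int b ^ 2 * y)))"
proof -
  obtain t where "a * A + 1 = b * t"
    using assms(4) by (metis cong_iff_dvd_diff diff_minus_eq_add dvdE)
  then have "A * a + (- t) * b = -1" by (simp add: algebra_simps)
  moreover have "Complex (of_int a / of_int b) y \<in> upper" using assms(3) by (simp add: upper_def)
  ultimately show ?thesis
    using moeb_rational_point[OF assms(2,3)] assms(1) unfolding gamma_invariant_def by metis
qed

section \<open>Escape to the cusp\<close>

lemma SL2Z_coprime_bottom_row: "(a, b, c, d) \<in> SL2Z \<Longrightarrow> coprime c d"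
  unfolding SL2Z_def by (auto intro!: coprimeI) (metis dvd_diff dvd_mult dvd_mult2 zdvd1_eq)

lemma SL2Z_bottom_row_dvd_denominator:
  fixes a b c d A B :: int
  assumes "(a, b, c, d) \<in> SL2Z" "c * A + d * B = 0" "B \<noteq> 0"
  shows "c \<noteq> 0" "c dvd B"
proof -
  show "c \<noteq> 0"
  proof
    assume "c = 0"
    then have "d = 0" using assms(2,3) by simp
    with \<open>c = 0\<close> show False using assms(1) by (simp add: SL2Z_def)
  qed
  have "coprime c d" using SL2Z_coprime_bottom_row assms(1) by simp
  moreover have "c dvd d * B"
    using assms(2) by (metis dvd_0_right dvd_add_triv_left_iff dvd_mult_left)
  ultimately show "c dvd B" by (simp add: coprime_dvd_mult_right_iff)
qed

lemma Im_moeb_rational_point: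
  fixes A B :: int and y :: real
  assumes "g \<in> SL2Z" "B > 0" "y > 0"
  shows "Im (moeb g (Complex (of_int A / of_int B) y)) \<le> of_int B ^ 2 * y \<or>
         Im (moeb g (Complex (of_int A / of_int B) y)) \<ge> 1 / (of_int B ^ 2 * y)"
proof -
  obtain a b c d where g: "g = (a, b, c, d)" by (cases g) auto
  define z where "z = Complex (of_int A / of_int B) y"
  define K where "K = c * A + d * B"
  have "of_int c * z + of_int d = Complex (of_int K / of_int B) (of_int c * y)"
    using assms(2) by (simp add: z_def K_def complex_eq_iff field_simps)
  then have den: "(cmod (of_int c * z + of_int d))\<^sup>2 = (of_int K / of_int B)\<^sup>2 + (of_int c * y)\<^sup>2"
    by (simp add: cmod_power2)
  have den_pos: "(cmod (of_int c * z + of_int d))\<^sup>2 > 0"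
    using moeb_denominator_nonzero assms(1,3) g by (simp add: z_def)
  have Im: "Im (moeb g z) = y / (cmod (of_int c * z + of_int d))\<^sup>2"
    using Im_moeb_SL2Z assms(1) g by (simp add: z_def)
  show ?thesis
  proof (cases "K = 0")
    case False
    then have "(1::real) \<le> (of_int K)\<^sup>2"
      by (smt (verit) of_int_1 of_int_power_le_of_int_cancel_iff zero_less_power2)
    then have "1 / (of_int B)\<^sup>2 \<le> (of_int K / of_int B :: real)\<^sup>2"
      by (simp add: power_divide divide_right_mono)
    then have "1 / (of_int B)\<^sup>2 \<le> (cmod (of_int c * z + of_int d))\<^sup>2"
      unfolding den by (rule add_increasing2[OF zero_le_power2])
    then have "Im (moeb g z) \<le> y / (1 / (of_int B)\<^sup>2)"
      unfolding Im using assms(2,3) den_pos by (intro divide_left_mono) auto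
    then show ?thesis by (simp add: z_def mult.commute)
  next
    case True
    then have "c \<noteq> 0" "c dvd B"
      using SL2Z_bottom_row_dvd_denominator[of a b c d A B] assms(1,2) g unfolding K_def by auto
    then have c_le_B: "(of_int c)\<^sup>2 \<le> (of_int B :: real)\<^sup>2" and c_pos: "(of_int c)\<^sup>2 > (0::real)"
      using assms(2) by (metis dvd_power_same of_int_power_eq_of_int_cancel_iff
          of_int_power_le_of_int_cancel_iff zdvd_imp_le zero_less_power, simp)
    have "Im (moeb g z) = 1 / ((of_int c)\<^sup>2 * y)"
      unfolding Im den using True assms(3) by (simp add: power2_eq_square)
    moreover have "1 / ((of_int B)\<^sup>2 * y) \<le> 1 / ((of_int c)\<^sup>2 * y)"
      using c_le_B c_pos assms(3) by (intro divide_left_mono mult_right_mono mult_pos_pos) auto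
    ultimately show ?thesis by (simp add: z_def)
  qed
qed

lemma gamma_orbit_rational_point_disjoint:
  fixes A B :: int and y \<delta> \<Delta> :: real
  assumes "C \<subseteq> upper" "\<And>w. w \<in> C \<Longrightarrow> \<delta> \<le> Im w \<and> Im w \<le> \<Delta>"
    and "B > 0" "y > 0" "of_int B ^ 2 * y < \<delta>" "of_int B ^ 2 * y * \<Delta> < 1"
  shows "gamma_orbit {Complex (of_int A / of_int B) y} \<inter> gamma_orbit C = {}"
proof (rule ccontr)
  assume meet: "gamma_orbit {Complex (of_int A / of_int B) y} \<inter> gamma_orbit C \<noteq> {}"
  have "{Complex (of_int A / of_int B) y} \<subseteq> upper" using assms(4) by (simp add: upper_def)
  then obtain h where h: "h \<in> SL2Z" "moeb h (Complex (of_int A / of_int B) y) \<in> C"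
    using gamma_orbits_meet[OF meet _ assms(1)] by blast
  define w where "w = moeb h (Complex (of_int A / of_int B) y)"
  have "\<delta> \<le> Im w" "Im w \<le> \<Delta>" using assms(2) h(2) by (auto simp: w_def)
  moreover have "Im w \<le> of_int B ^ 2 * y \<or> Im w \<ge> 1 / (of_int B ^ 2 * y)"
    unfolding w_def by (rule Im_moeb_rational_point[OF h(1) assms(3,4)])
  moreover have "\<Delta> < 1 / (of_int B ^ 2 * y)"
    using assms(3,4,6) by (simp add: less_divide_eq mult.commute)
  ultimately show False
    using assms(5) by linarith
qed

lemma compact_upper_Im_bounds:
  assumes "compact C" "C \<subseteq> upper"
  obtains \<delta> \<Delta> where "\<delta> > 0" "\<Delta> > 0" "\<And>w. w \<in> C \<Longrightarrow> \<delta> \<le> Im w \<and> Im w \<le> \<Delta>"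
proof (cases "C = {}")
  case False
  have Im_C: "compact (Im ` C)" using assms(1) by (intro compact_continuous_image continuous_intros)
  obtain w1 where "w1 \<in> C" "\<forall>w\<in>C. Im w1 \<le> Im w"
    using compact_attains_inf[OF Im_C] False by auto
  moreover obtain w2 where "w2 \<in> C" "\<forall>w\<in>C. Im w \<le> Im w2"
    using compact_attains_sup[OF Im_C] False by auto
  ultimately show ?thesis
    using that[of "Im w1" "Im w2"] assms(2) by (auto simp: upper_def)
qed (rule that[of 1 1]; simp)

lemma escapes_to_cusp_Rn:
  fixes p :: int and q :: nat and y :: "nat \<Rightarrow> real"
  assumes "q \<ge> 1" "\<forall>n\<ge>1. y n > 0" "(\<lambda>n. real n ^ 2 * y n) \<longlonglongrightarrow> 0"
  shows "escapes_to_cusp (\<lambda>n. Rn n (of_int p / real q) (y n))"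
  unfolding escapes_to_cusp_def
proof (intro allI impI)
  fix C assume C: "compact C \<and> C \<subseteq> upper"
  then obtain \<delta> \<Delta> where "\<delta> > 0" "\<Delta> > 0" and bounds: "\<And>w. w \<in> C \<Longrightarrow> \<delta> \<le> Im w \<and> Im w \<le> \<Delta>"
    using compact_upper_Im_bounds by blast
  have "(\<lambda>n. real q ^ 2 * (real n ^ 2 * y n)) \<longlonglongrightarrow> real q ^ 2 * 0"
    by (intro tendsto_mult tendsto_const assms(3))
  then have "\<forall>\<^sub>F n in sequentially. real q ^ 2 * (real n ^ 2 * y n) < min \<delta> (1 / \<Delta>)"
    using \<open>\<delta> > 0\<close> \<open>\<Delta> > 0\<close> by (intro order_tendstoD) auto
  then show "\<forall>\<^sub>F n in sequentially. gamma_orbit (Rn n (of_int p / real q) (y n)) \<inter> gamma_orbit C = {}"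
    using eventually_ge_at_top[of 1]
  proof eventually_elim
    case (elim n)
    define B where "B = int q * int n"
    have "B > 0" "y n > 0" using assms(1,2) elim(2) by (auto simp: B_def)
    have B2: "of_int B ^ 2 * y n = real q ^ 2 * (real n ^ 2 * y n)"
      by (simp add: B_def power_mult_distrib)
    have small: "of_int B ^ 2 * y n < \<delta>" "of_int B ^ 2 * y n * \<Delta> < 1"
      unfolding B2 using elim(1) \<open>\<Delta> > 0\<close> by (simp_all add: less_divide_eq)
    have "of_int p / real q + real j / real n = of_int (p * int n + int j * int q) / of_int B" for j
      using assms(1) elim(2) by (simp add: B_def field_simps)
    then have "Rn n (of_int p / real q) (y n)
        = (\<lambda>j. Complex (of_int (p * int n + int j * int q) / of_int B) (y n)) ` {..<n}"
      unfolding Rn_def by auto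
    moreover have "gamma_orbit {Complex (of_int (p * int n + int j * int q) / of_int B) (y n)}
        \<inter> gamma_orbit C = {}" for j
      using conjunct2[OF C] bounds \<open>B > 0\<close> \<open>y n > 0\<close> small by (rule gamma_orbit_rational_point_disjoint)
    ultimately have "\<forall>z\<in>Rn n (of_int p / real q) (y n). gamma_orbit {z} \<inter> gamma_orbit C = {}"
      by auto
    then show ?case by (subst gamma_orbit_eq_UN) blast
  qed
qed

lemma escapes_to_cusp_subset:
  assumes "escapes_to_cusp R" "\<And>n. R' n \<subseteq> R n"
  shows "escapes_to_cusp R'"
  unfolding escapes_to_cusp_def
proof (intro allI impI)
  fix C assume "compact C \<and> C \<subseteq> upper"
  then have "\<forall>\<^sub>F n in sequentially. gamma_orbit (R n) \<inter> gamma_orbit C = {}"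
    using assms(1) unfolding escapes_to_cusp_def by blast
  then show "\<forall>\<^sub>F n in sequentially. gamma_orbit (R' n) \<inter> gamma_orbit C = {}"
    by eventually_elim (use gamma_orbit_mono[OF assms(2)] in blast)
qed

section \<open>Test functions along horocycles\<close>

lemma Cc_smooth_M_continuous: "Cc_smooth_M f \<Longrightarrow> continuous_on upper f"
  unfolding Cc_smooth_M_def smooth_on_upper_def by blast

lemma Cc_smooth_M_bounded:
  assumes "Cc_smooth_M f"
  obtains B where "\<And>z. z \<in> upper \<Longrightarrow> norm (f z) \<le> B"
proof -
  obtain C where C: "compact C" "C \<subseteq> upper"
    and supp: "\<And>z. z \<in> upper \<Longrightarrow> f z \<noteq> 0 \<Longrightarrow> z \<in> gamma_orbit C"
    using assms unfolding Cc_smooth_M_def by blast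
  have "compact (f ` C)"
    using C Cc_smooth_M_continuous[OF assms] by (metis compact_continuous_image continuous_on_subset)
  then obtain B where B: "\<forall>w\<in>f ` C. norm w \<le> B"
    using compact_imp_bounded bounded_iff by blast
  have "norm (f z) \<le> max B 0" if z: "z \<in> upper" for z
  proof (cases "f z = 0")
    case False
    then obtain g w where "g \<in> SL2Z" "w \<in> C" "z = moeb g w"
      using supp z unfolding gamma_orbit_def by blast
    then have "f z = f w"
      using assms C(2) unfolding Cc_smooth_M_def gamma_invariant_def by blast
    moreover have "norm (f w) \<le> B" using B \<open>w \<in> C\<close> by blast
    ultimately show ?thesis by simp
  qed simp
  then show ?thesis by (rule that)
qed

lemma gamma_invariant_horizontal_translate:
  assumes "gamma_invariant f" "Y > 0"
  shows "f (Complex (t + of_int k) Y) = f (Complex t Y)"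
proof -
  have "Complex (t + of_int k) Y = Complex t Y + of_int k" by (simp add: complex_eq_iff)
  then show ?thesis using gamma_invariant_translate[OF assms(1)] assms(2) by simp
qed

lemma Cc_smooth_M_horizontal_continuous:
  assumes "Cc_smooth_M f" "Y > 0"
  shows "continuous_on UNIV (\<lambda>t. f (Complex t Y))"
proof -
  have "continuous_on UNIV (\<lambda>t. Complex t Y)" by (intro continuous_intros)
  moreover have "range (\<lambda>t. Complex t Y) \<subseteq> upper" using assms(2) by (auto simp: upper_def)
  ultimately show ?thesis
    using Cc_smooth_M_continuous[OF assms(1)] continuous_on_compose2 by blast
qed

lemma smooth_on_upper_horizontal_derivative:
  assumes "smooth_on_upper f" "Y > 0"
  obtains f' where "continuous_on upper f'"
    "\<And>u. ((\<lambda>t. f (Complex t Y)) has_vector_derivative f' (Complex u Y)) (at u)"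
proof -
  obtain F where "f \<in> F" "\<forall>g\<in>F. continuous_on upper g"
    "\<forall>g\<in>F. \<forall>v\<in>{1, \<i>}. \<exists>g'\<in>F. \<forall>z\<in>upper.
        ((\<lambda>t::real. g (z + of_real t * v)) has_vector_derivative g' z) (at 0)"
    using assms(1) unfolding smooth_on_upper_def by blast
  then obtain f' where "f' \<in> F"
    and f': "\<forall>z\<in>upper. ((\<lambda>t::real. f (z + of_real t * 1)) has_vector_derivative f' z) (at 0)"
    by blast
  with \<open>\<forall>g\<in>F. continuous_on upper g\<close> have f'_cont: "continuous_on upper f'" by blast
  have "((\<lambda>t. f (Complex t Y)) has_vector_derivative f' (Complex u Y)) (at u)" for u
  proof -
    have "((\<lambda>t. t - u) has_vector_derivative 1) (at u)"
      by (auto intro!: derivative_eq_intros)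
    moreover have "((\<lambda>t::real. f (Complex u Y + of_real t)) has_vector_derivative f' (Complex u Y)) (at (u - u))"
      using f' assms(2) by (auto simp: upper_def)
    ultimately have "((\<lambda>t. f (Complex u Y + of_real (t - u))) has_vector_derivative 1 *\<^sub>R f' (Complex u Y)) (at u)"
      using vector_diff_chain_at[of "\<lambda>t. t - u" 1 u] unfolding comp_def by blast
    moreover have "Complex u Y + of_real (t - u) = Complex t Y" for t
      by (simp add: complex_eq_iff)
    ultimately show ?thesis by simp
  qed
  with f'_cont show ?thesis by (rule that)
qed

lemma Cc_smooth_M_horizontal_lipschitz:
  assumes "Cc_smooth_M f" "Y > 0"
  obtains L where "L \<ge> 0"
    "\<And>s t. \<bar>s - t\<bar> \<le> 1 \<Longrightarrow> norm (f (Complex s Y) - f (Complex t Y)) \<le> L * \<bar>s - t\<bar>"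
proof -
  define F where "F = (\<lambda>t. f (Complex t Y))"
  obtain f' where f'_cont: "continuous_on upper f'"
    and F': "\<And>u. (F has_vector_derivative f' (Complex u Y)) (at u)"
    using smooth_on_upper_horizontal_derivative assms unfolding Cc_smooth_M_def F_def by metis
  have "continuous_on {-1..2} (\<lambda>u. f' (Complex u Y))"
    using assms(2) by (intro continuous_on_compose2[OF f'_cont] continuous_intros) (auto simp: upper_def)
  then have "bounded ((\<lambda>u. f' (Complex u Y)) ` {-1..2})"
    by (intro compact_imp_bounded compact_continuous_image) auto
  then obtain L where "L > 0" and L: "\<forall>z\<in>(\<lambda>u. f' (Complex u Y)) ` {-1..2}. norm z \<le> L"
    unfolding bounded_pos by blast
  have local: "norm (F s - F t) \<le> L * norm (s - t)" if "s \<in> {-1..2}" "t \<in> {-1..2}" for s t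
  proof (rule differentiable_bound[where f' = "\<lambda>u h. h *\<^sub>R f' (Complex u Y)"])
    show "(F has_derivative (\<lambda>h. h *\<^sub>R f' (Complex u Y))) (at u within {-1..2})" for u
      using F'[of u] unfolding has_vector_derivative_def by (rule has_derivative_at_withinI)
    show "onorm (\<lambda>h. h *\<^sub>R f' (Complex u Y)) \<le> L" if "u \<in> {-1..2}" for u
      using L that onorm_scaleR_left[OF bounded_linear_ident, of "f' (Complex u Y)"]
      by (simp add: onorm_id)
  qed (use that in simp_all)
  show ?thesis
  proof (rule that[of L])
    fix s t :: real assume "\<bar>s - t\<bar> \<le> 1"
    define k where "k = \<lfloor>s\<rfloor>"
    have "of_int k \<le> s" "s < of_int k + 1" unfolding k_def by linarith+
    then have "s - of_int k \<in> {-1..2}" "t - of_int k \<in> {-1..2}"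
      using \<open>\<bar>s - t\<bar> \<le> 1\<close> by (simp_all add: abs_le_iff)
    from local[OF this] have "norm (F (s - of_int k) - F (t - of_int k)) \<le> L * \<bar>s - t\<bar>"
      by simp
    moreover have "F (x - of_int k) = F x" for x
      using gamma_invariant_horizontal_translate[of f Y "x - of_int k" k] assms
      by (simp add: F_def Cc_smooth_M_def)
    ultimately show "norm (f (Complex s Y) - f (Complex t Y)) \<le> L * \<bar>s - t\<bar>"
      by (simp add: F_def)
  qed (use \<open>L > 0\<close> in simp)
qed

section \<open>Riemann sums of periodic functions\<close>

lemma integral_periodic_shift:
  fixes F :: "real \<Rightarrow> 'a::banach"
  assumes cont: "continuous_on UNIV F" and per: "\<And>t. F (t + 1) = F t"
  shows "integral {a..a + 1} F = integral {0..1} F"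
proof -
  interpret periodic_fun_simple' F by standard (rule per)
  define k where "k = \<lfloor>a\<rfloor>"
  define a' where "a' = a - of_int k"
  have a': "0 \<le> a'" "a' \<le> 1" unfolding a'_def k_def by linarith+
  have int: "F integrable_on {u..v}" for u v
    by (rule integrable_continuous_interval, rule continuous_on_subset[OF cont]) simp
  have "integral {a..a + 1} F = integral {a'..a' + 1} (\<lambda>x. F (x + of_int k))"
    using integral_shift_real_ivl[of a "of_int k" "a + 1" F] by (simp add: a'_def algebra_simps)
  also have "\<dots> = integral {a'..1} F + integral {1..a' + 1} F"
    using a' int by (simp add: plus_of_int Henstock_Kurzweil_Integration.integral_combine)
  also have "integral {1..a' + 1} F = integral {0..a'} F"
    using integral_shift_real_ivl[of 1 1 "a' + 1" F] by (simp add: per)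
  also have "integral {a'..1} F + integral {0..a'} F = integral {0..1} F"
    using a' int by (subst add.commute) (simp add: Henstock_Kurzweil_Integration.integral_combine)
  finally show ?thesis .
qed

lemma integral_left_endpoint_error:
  fixes F :: "real \<Rightarrow> complex"
  assumes cont: "continuous_on UNIV F" and L: "L \<ge> 0"
    and lip: "\<And>s t. \<bar>s - t\<bar> \<le> 1 \<Longrightarrow> norm (F s - F t) \<le> L * \<bar>s - t\<bar>"
    and h: "0 \<le> h" "h \<le> 1"
  shows "norm (integral {s..s + h} F - of_real h * F s) \<le> L * h\<^sup>2"
proof -
  have int: "F integrable_on {s..s + h}"
    by (rule integrable_continuous_interval, rule continuous_on_subset[OF cont]) simp
  have "integral {s..s + h} (\<lambda>u. F s) = of_real h * F s"
    using h by (simp add: content_real scaleR_conv_of_real)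
  then have "integral {s..s + h} F - of_real h * F s = integral {s..s + h} (\<lambda>u. F u - F s)"
    using integral_diff[OF int integrable_const_ivl, of "F s"] by simp
  also have "norm \<dots> \<le> (L * h) * ((s + h) - s)"
  proof (rule integral_bound)
    show "continuous_on {s..s + h} (\<lambda>u. F u - F s)"
      by (intro continuous_on_diff continuous_on_const continuous_on_subset[OF cont]) auto
    fix t assume "t \<in> {s..s + h}"
    then have d: "\<bar>t - s\<bar> \<le> h" by auto
    then have "norm (F t - F s) \<le> L * \<bar>t - s\<bar>" using h by (intro lip) auto
    also have "\<dots> \<le> L * h" using d L by (rule mult_left_mono)
    finally show "norm (F t - F s) \<le> L * h" .
  qed (use h in simp)
  finally show ?thesis by (simp add: power2_eq_square)
qed

lemma riemann_sum_periodic_bound: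
  fixes F :: "real \<Rightarrow> complex"
  assumes cont: "continuous_on UNIV F" and per: "\<And>t. F (t + 1) = F t"
    and L: "L \<ge> 0" and lip: "\<And>s t. \<bar>s - t\<bar> \<le> 1 \<Longrightarrow> norm (F s - F t) \<le> L * \<bar>s - t\<bar>"
    and M: "M \<ge> 1"
  shows "norm ((\<Sum>k<M. F (s + real k / real M)) - of_nat M * integral {0..1} F) \<le> L"
proof -
  define x where "x k = s + real k / real M" for k :: nat
  have int: "F integrable_on {u..v}" for u v
    by (rule integrable_continuous_interval, rule continuous_on_subset[OF cont]) simp
  have x_step: "x (Suc k) = x k + 1 / real M" for k
    by (simp add: x_def add_divide_distrib)
  have "integral {s..x n} F = (\<Sum>k<n. integral {x k..x (Suc k)} F)" for n
  proof (induction n)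
    case (Suc n)
    have "s \<le> x n" by (simp add: x_def)
    then have "integral {s..x (Suc n)} F = integral {s..x n} F + integral {x n..x (Suc n)} F"
      using int by (simp add: x_step Henstock_Kurzweil_Integration.integral_combine)
    with Suc show ?case by simp
  qed (simp add: x_def)
  from this[of M] have "integral {0..1} F = (\<Sum>k<M. integral {x k..x (Suc k)} F)"
    using integral_periodic_shift[OF cont per, of s] M by (simp add: x_def)
  then have I: "integral {0..1} F = (\<Sum>k<M. integral {x k..x k + 1 / real M} F)"
    by (simp only: x_step)
  have "(\<Sum>k<M. F (x k)) - of_nat M * integral {0..1} F
      = - of_nat M * (\<Sum>k<M. integral {x k..x k + 1 / real M} F - of_real (1 / real M) * F (x k))"
    using M by (simp add: I sum_subtractf sum_distrib_left sum_negf algebra_simps)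
  then have "norm ((\<Sum>k<M. F (x k)) - of_nat M * integral {0..1} F)
      = real M * norm (\<Sum>k<M. integral {x k..x k + 1 / real M} F - of_real (1 / real M) * F (x k))"
    by (simp add: norm_mult)
  also have "\<dots> \<le> real M * (\<Sum>k<M. L * (1 / real M)\<^sup>2)"
    using M by (intro mult_left_mono order.trans[OF norm_sum sum_mono]
        integral_left_endpoint_error[OF cont L lip]) auto
  also have "\<dots> = L" using M by (simp add: power2_eq_square)
  finally show ?thesis by (simp add: x_def)
qed

section \<open>Sieving an arithmetic progression\<close>

lemma prod_primes_dvd_iff:
  fixes D :: "nat set"
  assumes "finite D" "\<And>p. p \<in> D \<Longrightarrow> prime p"
  shows "\<Prod>D dvd X \<longleftrightarrow> (\<forall>p\<in>D. p dvd X)"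
  using assms
proof (induction D rule: finite_induct)
  case (insert p D)
  then have "coprime p (\<Prod>D)" by (intro prod_coprime_right primes_coprime) auto
  with insert show ?case by (auto simp: divides_mult dest: dvd_mult_left dvd_mult_right)
qed simp

lemma prod_subset_prime_factors_dvd:
  fixes N :: nat
  assumes "D \<subseteq> prime_factors N"
  shows "\<Prod>D dvd N"
  using assms prod_primes_dvd_iff[of D N] finite_subset[OF assms]
  by (auto simp: in_prime_factors_iff)

lemma coprime_iff_prime_factors_not_dvd:
  fixes X N :: nat
  assumes "N > 0"
  shows "coprime X N \<longleftrightarrow> (\<forall>p\<in>prime_factors N. \<not> p dvd X)"
proof
  assume "coprime X N"
  then show "\<forall>p\<in>prime_factors N. \<not> p dvd X"
    by (metis coprime_common_divisor in_prime_factors_iff not_prime_unit)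
next
  assume no_dvd: "\<forall>p\<in>prime_factors N. \<not> p dvd X"
  show "coprime X N"
  proof (rule ccontr)
    assume "\<not> coprime X N"
    then obtain p where "prime p" "p dvd gcd X N"
      using prime_factor_nat coprime_iff_gcd_eq_1 by blast
    moreover from this have "p \<in> prime_factors N"
      using assms by (intro prime_factorsI) auto
    ultimately show False using no_dvd by auto
  qed
qed

lemma prod_of_bool:
  "finite A \<Longrightarrow> (\<Prod>x\<in>A. of_bool (P x)) = (of_bool (\<forall>x\<in>A. P x) :: 'a::comm_semiring_1)"
  by (induction A rule: finite_induct) auto

lemma prod_one_minus_eq_sum_Pow:
  fixes f :: "'a \<Rightarrow> 'b::comm_ring_1"
  assumes "finite P"
  shows "(\<Prod>p\<in>P. 1 - f p) = (\<Sum>D\<in>Pow P. (-1) ^ card D * (\<Prod>p\<in>D. f p))"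
  using prod_add[of P "\<lambda>p. - f p" "\<lambda>_. 1"] assms by (simp add: prod_uminus)

lemma of_bool_coprime_eq_sum_Pow:
  fixes X N :: nat
  assumes "N > 0"
  shows "(of_bool (coprime X N) :: 'a::comm_ring_1)
       = (\<Sum>D\<in>Pow (prime_factors N). (-1) ^ card D * of_bool (\<Prod>D dvd X))"
proof -
  have "(of_bool (coprime X N) :: 'a) = (\<Prod>p\<in>prime_factors N. 1 - of_bool (p dvd X))"
    using coprime_iff_prime_factors_not_dvd[OF assms] by (simp add: prod_of_bool flip: of_bool_not_iff)
  also have "\<dots> = (\<Sum>D\<in>Pow (prime_factors N). (-1) ^ card D * (\<Prod>p\<in>D. of_bool (p dvd X)))"
    by (simp add: prod_one_minus_eq_sum_Pow)
  also have "\<dots> = (\<Sum>D\<in>Pow (prime_factors N). (-1) ^ card D * of_bool (\<Prod>D dvd X))"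
  proof (intro sum.cong refl arg_cong[where f = "\<lambda>x. _ * x"])
    fix D assume "D \<in> Pow (prime_factors N)"
    then have "finite D" "\<And>p. p \<in> D \<Longrightarrow> prime p"
      using finite_subset by (auto simp: in_prime_factors_iff)
    then show "(\<Prod>p\<in>D. of_bool (p dvd X)) = (of_bool (\<Prod>D dvd X) :: 'a)"
      by (simp add: prod_of_bool prod_primes_dvd_iff)
  qed
  finally show ?thesis .
qed

lemma sum_coprime_inclusion_exclusion:
  fixes v :: "'a \<Rightarrow> 'b::comm_ring_1" and g :: "'a \<Rightarrow> nat"
  assumes "finite K" "N > 0"
  shows "(\<Sum>k\<in>{k\<in>K. coprime (g k) N}. v k)
       = (\<Sum>D\<in>Pow (prime_factors N). (-1) ^ card D * (\<Sum>k\<in>{k\<in>K. \<Prod>D dvd g k}. v k))"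
proof -
  have filter: "(\<Sum>k\<in>{k\<in>K. P k}. v k) = (\<Sum>k\<in>K. of_bool (P k) * v k)" for P
    using assms(1) by (simp add: sum.inter_filter sum.inter_restrict)
  have "(\<Sum>k\<in>K. of_bool (coprime (g k) N) * v k)
      = (\<Sum>k\<in>K. \<Sum>D\<in>Pow (prime_factors N). (-1) ^ card D * of_bool (\<Prod>D dvd g k) * v k)"
    by (simp only: of_bool_coprime_eq_sum_Pow[OF assms(2)] sum_distrib_right)
  also have "\<dots> = (\<Sum>D\<in>Pow (prime_factors N). \<Sum>k\<in>K. (-1) ^ card D * of_bool (\<Prod>D dvd g k) * v k)"
    by (rule sum.swap)
  also have "\<dots> = (\<Sum>D\<in>Pow (prime_factors N). (-1) ^ card D * (\<Sum>k\<in>K. of_bool (\<Prod>D dvd g k) * v k))"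
    by (simp add: sum_distrib_left mult.assoc)
  finally show ?thesis by (simp only: filter)
qed

lemma totient_eq_sum_Pow:
  fixes N :: nat
  assumes "N > 0"
  shows "real (totient N) = (\<Sum>D\<in>Pow (prime_factors N). (-1) ^ card D * real (N div \<Prod>D))"
proof -
  have "real (totient N) = real N * (\<Prod>p\<in>prime_factors N. 1 - 1 / real p)"
    by (rule totient_formula2)
  also have "\<dots> = (\<Sum>D\<in>Pow (prime_factors N). (-1) ^ card D * (real N / real (\<Prod>D)))"
    by (simp add: prod_one_minus_eq_sum_Pow sum_distrib_left prod_dividef mult_ac)
  also have "\<dots> = (\<Sum>D\<in>Pow (prime_factors N). (-1) ^ card D * real (N div \<Prod>D))"
    by (intro sum.cong refl) (simp add: real_of_nat_div prod_subset_prime_factors_dvd)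
  finally show ?thesis .
qed

lemma bij_betw_affine_mod:
  fixes P Q :: int and m :: nat
  assumes "m > 0" "coprime Q (int m)"
  shows "bij_betw (\<lambda>k. nat ((P + int k * Q) mod int m)) {..<m} {..<m}"
proof -
  let ?\<sigma> = "\<lambda>k. nat ((P + int k * Q) mod int m)"
  have inj: "inj_on ?\<sigma> {..<m}"
  proof (rule inj_onI)
    fix k k' assume k: "k \<in> {..<m}" "k' \<in> {..<m}" and "?\<sigma> k = ?\<sigma> k'"
    then have "[P + int k * Q = P + int k' * Q] (mod int m)"
      using assms(1) by (simp add: cong_def eq_nat_nat_iff)
    then have "[Q * int k = Q * int k'] (mod int m)"
      by (simp add: cong_iff_dvd_diff algebra_simps)
    then have "[k = k'] (mod m)"
      using assms(2) by (simp add: cong_mult_lcancel cong_int_iff)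
    then show "k = k'" using k by (auto intro: cong_less_modulus_unique_nat)
  qed
  moreover have "?\<sigma> ` {..<m} \<subseteq> {..<m}"
    using assms(1) by (auto simp: nat_less_iff)
  ultimately show ?thesis
    by (simp add: bij_betw_def endo_inj_surj)
qed

lemma bij_betw_affine_mod_nat:
  fixes u b m :: nat
  assumes "m > 0" "coprime b m"
  shows "bij_betw (\<lambda>k. (u + b * k) mod m) {..<m} {..<m}"
proof -
  have "nat ((int u + int k * int b) mod int m) = (u + b * k) mod m" for k
  proof -
    have "int u + int k * int b = int (u + b * k)" by simp
    then show ?thesis by (simp only: zmod_int[symmetric] nat_int)
  qed
  then show ?thesis
    using bij_betw_affine_mod[of m "int b" "int u"] assms by simp
qed

lemma progression_dvd_eq_image:
  fixes u b d N :: nat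
  assumes d: "d > 0" "d dvd N" and cop: "coprime b d"
  obtains k0 where "k0 < d" "{k. k < N \<and> d dvd u + b * k} = (\<lambda>t. k0 + d * t) ` {..<N div d}"
proof -
  have "0 \<in> (\<lambda>k. (u + b * k) mod d) ` {..<d}"
    using bij_betw_imp_surj_on[OF bij_betw_affine_mod_nat[OF d(1) cop]] d(1) by simp
  then obtain k0 where k0: "k0 < d" "(u + b * k0) mod d = 0" by auto
  then have "d dvd u + b * k0" by (simp add: dvd_eq_mod_eq_0)
  have "{k. k < N \<and> d dvd u + b * k} = (\<lambda>t. k0 + d * t) ` {..<N div d}"
  proof (intro equalityI subsetI)
    fix k assume "k \<in> {k. k < N \<and> d dvd u + b * k}"
    then have k: "k < N" "d dvd u + b * k" by auto
    then have "[u + b * k = u + b * k0] (mod d)" using k0(2) by (simp add: cong_def dvd_eq_mod_eq_0)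
    then have "[k = k0] (mod d)" using cop by (simp add: cong_add_lcancel_nat cong_mult_lcancel_nat)
    then have "k mod d = k0" using k0(1) by (simp add: cong_def)
    then have "k = k0 + d * (k div d)" using mod_div_mult_eq[of k d] by (simp add: mult.commute)
    moreover have "k div d < N div d"
      using k(1) d(2) by (intro less_mult_imp_div_less) simp
    ultimately show "k \<in> (\<lambda>t. k0 + d * t) ` {..<N div d}" by blast
  next
    fix k assume "k \<in> (\<lambda>t. k0 + d * t) ` {..<N div d}"
    then obtain t where t: "t < N div d" "k = k0 + d * t" by auto
    have "k < d * (t + 1)" using t k0(1) by simp
    also have "\<dots> \<le> d * (N div d)" using t(1) by (intro mult_le_mono2) simp
    finally have "k < N" using d(2) by simp
    moreover have "u + b * k = (u + b * k0) + d * (b * t)" using t(2) by (simp add: algebra_simps)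
    then have "d dvd u + b * k" using \<open>d dvd u + b * k0\<close> by (metis dvd_add dvd_triv_left)
    ultimately show "k \<in> {k. k < N \<and> d dvd u + b * k}" by simp
  qed
  with k0(1) show ?thesis by (rule that)
qed

lemma progression_dvd_riemann_sum_bound:
  fixes F :: "real \<Rightarrow> complex" and N b d u :: nat
  assumes cont: "continuous_on UNIV F" and per: "\<And>t. F (t + 1) = F t"
    and L: "L \<ge> 0" and lip: "\<And>s t. \<bar>s - t\<bar> \<le> 1 \<Longrightarrow> norm (F s - F t) \<le> L * \<bar>s - t\<bar>"
    and N: "N > 0" and b: "b > 0" and d: "d dvd N" and cop: "coprime b d"
  shows "norm ((\<Sum>k\<in>{k. k < N \<and> d dvd u + b * k}. F (real (u + b * k) / real (b * N)))
           - of_nat (N div d) * integral {0..1} F) \<le> L"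
proof -
  have "d > 0" using d N by (intro Nat.gr0I) auto
  obtain k0 where "k0 < d" and AP: "{k. k < N \<and> d dvd u + b * k} = (\<lambda>t. k0 + d * t) ` {..<N div d}"
    using progression_dvd_eq_image[OF \<open>d > 0\<close> d cop] by blast
  define M where "M = N div d"
  have "M \<ge> 1" using d N by (auto simp: M_def elim: dvdE)
  define s where "s = real (u + b * k0) / real (b * N)"
  have "F (real (u + b * (k0 + d * t)) / real (b * N)) = F (s + real t / real M)" for t
  proof -
    have "N = M * d" using d by (simp add: M_def)
    then show ?thesis using b \<open>d > 0\<close> \<open>M \<ge> 1\<close> by (simp add: s_def field_simps)
  qed
  then have "(\<Sum>k\<in>{k. k < N \<and> d dvd u + b * k}. F (real (u + b * k) / real (b * N)))
      = (\<Sum>t<M. F (s + real t / real M))"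
    unfolding AP M_def[symmetric] using \<open>d > 0\<close> by (subst sum.reindex) (auto simp: inj_on_def)
  then show ?thesis
    using riemann_sum_periodic_bound[OF cont per L lip \<open>M \<ge> 1\<close>, of s] by (simp add: M_def)
qed

lemma coprime_progression_riemann_sum_bound:
  fixes F :: "real \<Rightarrow> complex" and N b u :: nat
  assumes cont: "continuous_on UNIV F" and per: "\<And>t. F (t + 1) = F t"
    and L: "L \<ge> 0" and lip: "\<And>s t. \<bar>s - t\<bar> \<le> 1 \<Longrightarrow> norm (F s - F t) \<le> L * \<bar>s - t\<bar>"
    and N: "N > 0" and b: "b > 0" and cop: "coprime b N"
  shows "norm ((\<Sum>k\<in>{k. k < N \<and> coprime (u + b * k) N}. F (real (u + b * k) / real (b * N)))
           - of_nat (totient N) * integral {0..1} F) \<le> L * 2 ^ card (prime_factors N)"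
proof -
  define v where "v k = F (real (u + b * k) / real (b * N))" for k
  define I where "I = integral {0..1} F"
  define A where "A D = (\<Sum>k\<in>{k. k < N \<and> \<Prod>D dvd u + b * k}. v k)" for D :: "nat set"
  have "(\<Sum>k\<in>{k. k < N \<and> coprime (u + b * k) N}. v k) = (\<Sum>D\<in>Pow (prime_factors N). (-1) ^ card D * A D)"
    using sum_coprime_inclusion_exclusion[of "{..<N}" N v "\<lambda>k. u + b * k"] N by (simp add: A_def)
  moreover have "of_nat (totient N) = (\<Sum>D\<in>Pow (prime_factors N). (-1) ^ card D * of_nat (N div \<Prod>D) :: complex)"
    using arg_cong[OF totient_eq_sum_Pow[OF N], of complex_of_real] by simp
  ultimately have "(\<Sum>k\<in>{k. k < N \<and> coprime (u + b * k) N}. v k) - of_nat (totient N) * I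
      = (\<Sum>D\<in>Pow (prime_factors N). (-1) ^ card D * (A D - of_nat (N div \<Prod>D) * I))"
    by (simp add: sum_distrib_left sum_distrib_right sum_subtractf algebra_simps)
  also have "norm \<dots> \<le> (\<Sum>D\<in>Pow (prime_factors N). L)"
  proof (rule order.trans[OF norm_sum sum_mono])
    fix D assume "D \<in> Pow (prime_factors N)"
    then have "\<Prod>D dvd N" by (simp add: prod_subset_prime_factors_dvd)
    then show "norm ((-1) ^ card D * (A D - of_nat (N div \<Prod>D) * I)) \<le> L"
      using progression_dvd_riemann_sum_bound[OF cont per L lip N b _ coprime_divisors[OF dvd_refl _ cop]]
      by (simp add: norm_mult norm_power A_def v_def I_def)
  qed
  also have "\<dots> = L * 2 ^ card (prime_factors N)" by (simp add: card_Pow)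
  finally show ?thesis by (simp add: v_def I_def)
qed

lemma card_coprime_below:
  assumes "N > 0"
  shows "card {j. j < N \<and> coprime j N} = totient N"
proof (cases "N = 1")
  case False
  have "{j. j < N \<and> coprime j N} = totatives N"
  proof (intro equalityI subsetI)
    fix j assume j: "j \<in> {j. j < N \<and> coprime j N}"
    have "j \<noteq> 0"
    proof
      assume "j = 0"
      with j have "N = 1" by simp
      with False show False ..
    qed
    with j show "j \<in> totatives N" by (simp add: in_totatives_iff)
  next
    fix j assume "j \<in> totatives N"
    moreover from this have "j \<noteq> N" using False by (auto simp: in_totatives_iff)
    ultimately show "j \<in> {j. j < N \<and> coprime j N}" by (simp add: in_totatives_iff)
  qed
  then show ?thesis by (simp add: totient_def)
qed simp

lemma card_coprime_progression:
  fixes u b N :: nat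
  assumes "N > 0" "coprime b N"
  shows "card {k. k < N \<and> coprime (u + b * k) N} = totient N"
proof -
  define \<sigma> where "\<sigma> k = (u + b * k) mod N" for k
  have bij: "bij_betw \<sigma> {..<N} {..<N}"
    unfolding \<sigma>_def using assms by (rule bij_betw_affine_mod_nat)
  have "{k. k < N \<and> coprime (u + b * k) N} = {k\<in>{..<N}. coprime (\<sigma> k) N}"
    using assms(1) by (auto simp: \<sigma>_def)
  moreover have "\<sigma> ` {k\<in>{..<N}. coprime (\<sigma> k) N} = {j\<in>\<sigma> ` {..<N}. coprime j N}"
    by blast
  ultimately have "bij_betw \<sigma> {k. k < N \<and> coprime (u + b * k) N} {j. j < N \<and> coprime j N}"
    using bij_betw_imp_surj_on[OF bij] by (intro bij_betw_subset[OF bij]) auto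
  then show ?thesis
    by (simp add: bij_betw_same_card card_coprime_below[OF assms(1)])
qed

section \<open>Growth of the totient function\<close>

lemma prime_power_totient_cube_bound:
  fixes p j :: nat
  assumes p: "prime p"
  shows "8 * p ^ Suc j \<le> (if p = 2 then 16 else if p = 3 then 3 else 1) * (p ^ j * (p - 1)) ^ 3"
proof -
  have "1 \<le> p ^ j" using prime_gt_0_nat[OF p] by simp
  then have pj: "p ^ j \<le> (p ^ j) ^ 3"
    using power_increasing[of 1 3 "p ^ j"] by simp
  consider "p = 2" | "p = 3" | "p \<ge> 5"
  proof -
    have "p \<noteq> 4"
      using p prime_product[of "2::nat" 2] by auto
    then show ?thesis using prime_ge_2_nat[OF p] that by linarith
  qed
  then show ?thesis
  proof cases
    case 1
    then show ?thesis using pj by simp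
  next
    case 2
    have "8 * p ^ Suc j = 3 * (8 * p ^ j)" using 2 by simp
    also have "\<dots> \<le> 3 * ((p ^ j) ^ 3 * 8)" using pj by simp
    also have "(p ^ j) ^ 3 * 8 = (p ^ j * (p - 1)) ^ 3" using 2 by (simp add: power_mult_distrib)
    finally show ?thesis using 2 by simp
  next
    case 3
    have "8 * p \<le> 16 * (p - 1)" using 3 by simp
    also have "16 * (p - 1) \<le> (p - 1) * (p - 1) * (p - 1)"
      using 3 mult_mono[of 4 "p - 1" 4 "p - 1"] by (intro mult_right_mono) auto
    finally have "8 * p \<le> (p - 1) ^ 3" by (simp add: power3_eq_cube)
    then have "(8 * p) * p ^ j \<le> (p - 1) ^ 3 * (p ^ j) ^ 3" using pj by (rule mult_mono) auto
    then show ?thesis using 3 by (simp add: power_mult_distrib mult_ac)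
  qed
qed

lemma eight_pow_card_prime_factors_le:
  fixes N :: nat
  assumes N: "N > 0"
  shows "8 ^ card (prime_factors N) * N \<le> 48 * totient N ^ 3"
proof -
  define P where "P = prime_factors N"
  define k where "k p = multiplicity p N" for p
  define C where "C p = (if p = 2 then 16 else if p = 3 then 3 else 1 :: nat)" for p :: nat
  have "8 ^ card P * N = (\<Prod>p\<in>P. 8 * p ^ k p)"
    using prime_factorization_nat[OF N] by (simp add: P_def k_def prod.distrib)
  also have "\<dots> \<le> (\<Prod>p\<in>P. C p * (p ^ (k p - 1) * (p - 1)) ^ 3)"
  proof (rule prod_mono)
    fix p assume p: "p \<in> P"
    then have "Suc (k p - 1) = k p" by (simp add: P_def k_def prime_factors_multiplicity)
    moreover have "prime p" using p by (simp add: P_def in_prime_factors_iff)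
    ultimately show "0 \<le> 8 * p ^ k p \<and> 8 * p ^ k p \<le> C p * (p ^ (k p - 1) * (p - 1)) ^ 3"
      using prime_power_totient_cube_bound[of p "k p - 1"] by (simp add: C_def)
  qed
  also have "\<dots> = (\<Prod>p\<in>P. C p) * (\<Prod>p\<in>P. (p ^ (k p - 1) * (p - 1)) ^ 3)"
    by (rule prod.distrib)
  also have "(\<Prod>p\<in>P. (p ^ (k p - 1) * (p - 1)) ^ 3) = (\<Prod>p\<in>P. p ^ (k p - 1) * (p - 1)) ^ 3"
    by (rule prod_power_distrib[symmetric])
  also have "(\<Prod>p\<in>P. p ^ (k p - 1) * (p - 1)) = totient N"
    using totient_formula1[OF N] by (simp add: P_def k_def)
  also have "(\<Prod>p\<in>P. C p) \<le> 48"
  proof -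
    have "(\<Prod>p\<in>P. C p) = (\<Prod>p\<in>P \<inter> {2, 3}. C p)"
      by (intro prod.mono_neutral_right) (auto simp: P_def C_def)
    also have "\<dots> \<le> 48"
    proof (rule dvd_imp_le)
      have "(\<Prod>p\<in>P \<inter> {2, 3}. C p) dvd (\<Prod>p\<in>{2, 3}. C p)"
        by (rule prod_dvd_prod_subset) auto
      then show "(\<Prod>p\<in>P \<inter> {2, 3}. C p) dvd 48" by (simp add: C_def)
    qed simp
    finally show ?thesis .
  qed
  then have "(\<Prod>p\<in>P. C p) * totient N ^ 3 \<le> 48 * totient N ^ 3" by (rule mult_right_mono) simp
  finally show ?thesis by (simp add: P_def)
qed

lemma tendsto_two_pow_card_prime_factors_div_totient:
  "(\<lambda>N. 2 ^ card (prime_factors N) / real (totient N)) \<longlonglongrightarrow> 0"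
proof (rule tendsto_sandwich[of "\<lambda>_. 0" _ _ "\<lambda>N. root 3 (48 / real N)"])
  show "\<forall>\<^sub>F N in sequentially. 2 ^ card (prime_factors N) / real (totient N) \<le> root 3 (48 / real N)"
    using eventually_gt_at_top[of 0]
  proof eventually_elim
    case (elim N)
    define x where "x = 2 ^ card (prime_factors N) / real (totient N)"
    have "((2::real) ^ card (prime_factors N)) ^ 3 = 8 ^ card (prime_factors N)"
      unfolding power_mult[symmetric] by (subst mult.commute) (simp add: power_mult)
    then have "x ^ 3 = 8 ^ card (prime_factors N) / real (totient N) ^ 3"
      by (simp add: x_def power_divide)
    also have "\<dots> \<le> 48 / real N"
    proof -
      have "real (8 ^ card (prime_factors N) * N) \<le> real (48 * totient N ^ 3)"
        using eight_pow_card_prime_factors_le[OF elim] by (simp only: of_nat_le_iff)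
      then show ?thesis using elim by (simp add: field_simps)
    qed
    finally have "root 3 (x ^ 3) \<le> root 3 (48 / real N)" by simp
    then show ?case by (simp add: x_def real_root_power_cancel)
  qed
  show "(\<lambda>N. root 3 (48 / real N)) \<longlonglongrightarrow> 0"
    using tendsto_real_root[OF lim_const_over_n[of 48], of 3] by simp
qed simp_all

section \<open>Primitive rational translates\<close>

lemma coprime_sum_fraction_numerator:
  fixes a :: int and b N j :: nat
  assumes "coprime a (int b)" "coprime N b" "coprime j N"
  shows "coprime (a * int N + int j * int b) (int b * int N)"
proof -
  have "[a * int N = a * int N + int j * int b] (mod int b)"
    "[int j * int b = a * int N + int j * int b] (mod int N)"
    by (simp_all add: cong_iff_dvd_diff)
  moreover have "coprime (a * int N) (int b)" "coprime (int j * int b) (int N)"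
    using assms by (simp_all add: coprime_commute)
  ultimately show ?thesis
    by (simp add: cong_imp_coprime)
qed

lemma neg_inverse_mod_exists:
  fixes n :: int and m :: nat
  assumes "m > 0" "coprime n (int m)"
  obtains u where "u < m" "[n * int u = -1] (mod int m)"
proof -
  obtain x where x: "[n * x = 1] (mod int m)" using cong_solve_coprime_int[OF assms(2)] by blast
  define u where "u = nat ((- x) mod int m)"
  have "int u = (- x) mod int m" using assms(1) by (simp add: u_def)
  then have "[n * int u = n * (- x)] (mod int m)" by (simp add: cong_def mod_mult_right_eq)
  also have "[n * (- x) = -1] (mod int m)" using x by (metis cong_minus_minus_iff minus_mult_right)
  finally have "[n * int u = -1] (mod int m)" .
  moreover have "u < m" using assms(1) by (simp add: u_def nat_less_iff)
  ultimately show ?thesis using that by blast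
qed

lemma neg_inverse_in_residue_class:
  fixes a :: int and b N j u :: nat
  assumes b: "b > 0" and N: "N > 0" and ab: "coprime a (int b)" and Nb: "coprime N b"
    and jN: "coprime j N" and u: "u < b" "[a * int N * int u = -1] (mod int b)"
  obtains k where "k < N" "[(a * int N + int j * int b) * int (u + b * k) = -1] (mod int b * int N)"
proof -
  define n where "n = a * int N + int j * int b"
  have "coprime n (int (b * N))"
    unfolding n_def of_nat_mult by (rule coprime_sum_fraction_numerator[OF ab Nb jN])
  then obtain A where A: "A < b * N" "[n * int A = -1] (mod int b * int N)"
    using neg_inverse_mod_exists[of "b * N" n] b N by auto
  have "[a * int N * int A = -1] (mod int b)"
  proof -
    have "[n * int A = -1] (mod int b)" using A(2) by (rule cong_modulus_mult)
    moreover have "[a * int N * int A = n * int A] (mod int b)"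
      by (simp add: n_def cong_iff_dvd_diff algebra_simps)
    ultimately show ?thesis by (rule cong_trans[rotated])
  qed
  then have "[a * int N * int A = a * int N * int u] (mod int b)"
    using u(2) by (metis cong_sym cong_trans)
  moreover have "coprime (a * int N) (int b)" using ab Nb by (simp add: coprime_commute)
  ultimately have "[A = u] (mod b)" by (simp add: cong_mult_lcancel cong_int_iff)
  then have "A = u + b * (A div b)" using u(1) mod_div_mult_eq[of A b] by (simp add: cong_def mult.commute)
  moreover have "A div b < N" using A(1) by (intro less_mult_imp_div_less) (simp add: mult.commute)
  ultimately show ?thesis
    using A(2) that[of "A div b"] by (simp add: n_def)
qed

lemma cong_neg_one_imp_coprime:
  fixes n X m :: int
  assumes "[n * X = -1] (mod m)"
  shows "coprime X m"
proof -
  have "coprime (n * X) m" by (rule cong_imp_coprime[OF cong_sym[OF assms]]) simp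
  then show ?thesis by simp
qed

lemma neg_inverse_determines_numerator:
  fixes a X :: int and b N j j' :: nat
  assumes "b > 0" "j < N" "j' < N"
    and "[(a * int N + int j * int b) * X = -1] (mod int b * int N)"
    and "[(a * int N + int j' * int b) * X = -1] (mod int b * int N)"
  shows "j = j'"
proof -
  have "[X * (a * int N + int j * int b) = -1] (mod int b * int N)"
    "[-1 = X * (a * int N + int j' * int b)] (mod int b * int N)"
    using assms(4,5) by (simp_all add: mult.commute cong_sym_eq)
  then have "[X * (a * int N + int j * int b) = X * (a * int N + int j' * int b)] (mod int b * int N)"
    by (rule cong_trans)
  then have "[a * int N + int j * int b = a * int N + int j' * int b] (mod int b * int N)"
    using cong_neg_one_imp_coprime[OF assms(4)] by (simp add: cong_mult_lcancel)
  then have "int b * int N dvd int b * (int j - int j')"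
    by (simp add: cong_iff_dvd_diff algebra_simps)
  then have "[int j = int j'] (mod int N)" using assms(1) by (simp add: cong_iff_dvd_diff)
  then show "j = j'" using assms(2,3) by (auto simp: cong_int_iff intro: cong_less_modulus_unique_nat)
qed

lemma bij_betw_neg_inverses:
  fixes a :: int and b N u :: nat
  assumes b: "b > 0" and N: "N > 0" and ab: "coprime a (int b)" and Nb: "coprime N b"
    and u: "u < b" "[a * int N * int u = -1] (mod int b)"
  obtains h where "bij_betw h {j. j < N \<and> coprime j N} {k. k < N \<and> coprime (u + b * k) N}"
    "\<And>j. j < N \<Longrightarrow> coprime j N \<Longrightarrow>
        [(a * int N + int j * int b) * int (u + b * h j) = -1] (mod int b * int N)"
proof -
  define S where "S = {j. j < N \<and> coprime j N}"
  define T where "T = {k. k < N \<and> coprime (u + b * k) N}"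
  define neg_inv where "neg_inv j k \<longleftrightarrow>
      k < N \<and> [(a * int N + int j * int b) * int (u + b * k) = -1] (mod int b * int N)" for j k
  define h where "h j = (SOME k. neg_inv j k)" for j
  have h: "neg_inv j (h j)" if "j \<in> S" for j
    unfolding h_def
    using neg_inverse_in_residue_class[OF b N ab Nb _ u, of j] that
    by (metis (mono_tags, lifting) S_def neg_inv_def mem_Collect_eq someI)
  have "h ` S \<subseteq> T"
  proof
    fix k assume "k \<in> h ` S"
    then obtain j where "j \<in> S" "k = h j" by blast
    with h have "neg_inv j k" by simp
    then have "k < N" "coprime (int (u + b * k)) (int b * int N)"
      unfolding neg_inv_def by (blast intro: cong_neg_one_imp_coprime)+
    then show "k \<in> T"
      unfolding T_def by (metis coprime_int_iff coprime_mult_right_iff mem_Collect_eq)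
  qed
  moreover have "inj_on h S"
  proof (rule inj_onI)
    fix j j' assume "j \<in> S" "j' \<in> S" "h j = h j'"
    with h[of j] h[of j'] show "j = j'"
      unfolding neg_inv_def S_def
      by (intro neg_inverse_determines_numerator[OF b, of j N j' a "int (u + b * h j)"]) auto
  qed
  moreover have "card S = card T"
    using card_coprime_below[OF N] card_coprime_progression[OF N, of b u] Nb
    by (simp add: S_def T_def coprime_commute)
  ultimately have "bij_betw h S T"
    by (simp add: bij_betw_def card_subset_eq card_image T_def)
  then show ?thesis
    using that h by (simp add: S_def T_def neg_inv_def)
qed

lemma delta_pr_rational_eq_progression_sum:
  fixes a :: int and b N :: nat and c :: real
  assumes b: "b > 0" and N: "N > 0" and ab: "coprime a (int b)" and Nb: "coprime N b"
    and c: "c > 0" and inv: "gamma_invariant f"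
  obtains u where "delta_pr N (of_int a / real b) (c / real N ^ 2) f
      = (1 / of_nat (totient N)) * (\<Sum>k\<in>{k. k < N \<and> coprime (u + b * k) N}.
          f (Complex (real (u + b * k) / real (b * N)) (1 / (c * real b ^ 2))))"
proof -
  have "coprime (a * int N) (int b)" using ab Nb by (simp add: coprime_commute)
  then obtain u where u: "u < b" "[a * int N * int u = -1] (mod int b)"
    using neg_inverse_mod_exists b by blast
  obtain h where h: "bij_betw h {j. j < N \<and> coprime j N} {k. k < N \<and> coprime (u + b * k) N}"
    and h_inv: "\<And>j. j < N \<Longrightarrow> coprime j N \<Longrightarrow>
        [(a * int N + int j * int b) * int (u + b * h j) = -1] (mod int b * int N)"
    using bij_betw_neg_inverses[OF b N ab Nb u] by blast
  have "f (Complex (of_int a / real b + real j / real N) (c / real N ^ 2))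
      = f (Complex (real (u + b * h j) / real (b * N)) (1 / (c * real b ^ 2)))"
    if "j < N" "coprime j N" for j
  proof -
    have "of_int a / real b + real j / real N = of_int (a * int N + int j * int b) / of_int (int b * int N)"
      using b N by (simp add: field_simps)
    moreover have "1 / (of_int (int b * int N) ^ 2 * (c / real N ^ 2)) = 1 / (c * real b ^ 2)"
      using N by (simp add: power_mult_distrib)
    ultimately show ?thesis
      using gamma_invariant_rational_point[OF inv _ _ h_inv[OF that], of "c / real N ^ 2"] b N c
      by simp
  qed
  then have "(\<Sum>j\<in>{j. j < N \<and> coprime j N}. f (Complex (of_int a / real b + real j / real N) (c / real N ^ 2)))
      = (\<Sum>j\<in>{j. j < N \<and> coprime j N}. f (Complex (real (u + b * h j) / real (b * N)) (1 / (c * real b ^ 2))))"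
    by (intro sum.cong) auto
  also have "\<dots> = (\<Sum>k\<in>{k. k < N \<and> coprime (u + b * k) N}. f (Complex (real (u + b * k) / real (b * N)) (1 / (c * real b ^ 2))))"
    by (rule sum.reindex_bij_betw[OF h])
  finally show ?thesis by (intro that[of u]) (simp add: delta_pr_def)
qed

lemma delta_pr_rational_error_bound:
  fixes a :: int and b :: nat and c :: real
  assumes b: "b > 0" and ab: "coprime a (int b)" and c: "c > 0" and f: "Cc_smooth_M f"
  obtains L where "\<And>N. N > 0 \<Longrightarrow> coprime N b \<Longrightarrow>
      norm (delta_pr N (of_int a / real b) (c / real N ^ 2) f - mu (1 / (c * real b ^ 2)) f)
        \<le> L * (2 ^ card (prime_factors N) / real (totient N))"
proof -
  define Y where "Y = 1 / (c * real b ^ 2)"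
  have "Y > 0" using b c by (simp add: Y_def)
  define F where "F = (\<lambda>t. f (Complex t Y))"
  have inv: "gamma_invariant f" using f by (simp add: Cc_smooth_M_def)
  obtain L where "L \<ge> 0" and lip: "\<And>s t. \<bar>s - t\<bar> \<le> 1 \<Longrightarrow> norm (F s - F t) \<le> L * \<bar>s - t\<bar>"
    using Cc_smooth_M_horizontal_lipschitz[OF f \<open>Y > 0\<close>] unfolding F_def by blast
  have cont: "continuous_on UNIV F"
    unfolding F_def by (rule Cc_smooth_M_horizontal_continuous[OF f \<open>Y > 0\<close>])
  have per: "F (t + 1) = F t" for t
    using gamma_invariant_horizontal_translate[OF inv \<open>Y > 0\<close>, of t 1] by (simp add: F_def)
  have "norm (delta_pr N (of_int a / real b) (c / real N ^ 2) f - mu Y f)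
      \<le> L * (2 ^ card (prime_factors N) / real (totient N))" if N: "N > 0" and Nb: "coprime N b" for N
  proof -
    define S where "S u = (\<Sum>k\<in>{k. k < N \<and> coprime (u + b * k) N}. F (real (u + b * k) / real (b * N)))" for u
    obtain u where u: "delta_pr N (of_int a / real b) (c / real N ^ 2) f = (1 / of_nat (totient N)) * S u"
      using delta_pr_rational_eq_progression_sum[OF b N ab Nb c inv] unfolding F_def Y_def S_def by blast
    have tot: "real (totient N) > 0" using N by simp
    have "delta_pr N (of_int a / real b) (c / real N ^ 2) f - mu Y f
        = (S u - of_nat (totient N) * integral {0..1} F) / of_nat (totient N)"
      using tot unfolding u by (simp add: mu_def F_def field_simps)
    then have "norm (delta_pr N (of_int a / real b) (c / real N ^ 2) f - mu Y f)
        = norm (S u - of_nat (totient N) * integral {0..1} F) / real (totient N)"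
      by (simp add: norm_divide)
    also have "\<dots> \<le> L * 2 ^ card (prime_factors N) / real (totient N)"
      using coprime_progression_riemann_sum_bound[OF cont per \<open>L \<ge> 0\<close> lip N b, of u] Nb tot
      by (intro divide_right_mono) (simp_all add: S_def coprime_commute)
    finally show ?thesis by simp
  qed
  then show ?thesis by (intro that) (simp add: Y_def)
qed

lemma delta_pr_rational_tendsto:
  fixes a :: int and b :: nat and c :: real
  assumes "b > 0" "coprime a (int b)" "c > 0" "Cc_smooth_M f"
  shows "filterlim (\<lambda>N. delta_pr N (of_int a / real b) (c / real N ^ 2) f)
           (nhds (mu (1 / (c * real b ^ 2)) f)) (inf sequentially (principal {N. coprime N b}))"
proof -
  let ?F = "inf sequentially (principal {N. coprime N b})"
  let ?err = "\<lambda>N. delta_pr N (of_int a / real b) (c / real N ^ 2) f - mu (1 / (c * real b ^ 2)) f"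
  obtain L where L: "\<And>N. N > 0 \<Longrightarrow> coprime N b \<Longrightarrow>
      norm (?err N) \<le> L * (2 ^ card (prime_factors N) / real (totient N))"
    using delta_pr_rational_error_bound[OF assms] by blast
  have "eventually (\<lambda>N. norm (?err N) \<le> L * (2 ^ card (prime_factors N) / real (totient N))) ?F"
    unfolding eventually_inf_principal using eventually_gt_at_top[of 0]
    by eventually_elim (use L in blast)
  moreover have "((\<lambda>N. L * (2 ^ card (prime_factors N) / real (totient N))) \<longlongrightarrow> 0) ?F"
    using tendsto_mult_right_zero[OF tendsto_two_pow_card_prime_factors_div_totient, of L]
    by (rule tendsto_mono[OF inf_le1])
  ultimately have "(?err \<longlongrightarrow> 0) ?F" by (rule Lim_null_comparison)
  then show ?thesis by (rule LIM_zero_cancel)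
qed

section \<open>Translates along P_m\<close>

lemma sum_periodic_mult_coprime:
  fixes G :: "real \<Rightarrow> 'a::comm_monoid_add"
  assumes per: "\<And>t. G (t + 1) = G t" and m: "m > 0" and l: "l > 0" and cop: "coprime m l"
  shows "(\<Sum>j<m * l. G (real j / real (m * l))) = (\<Sum>\<alpha><m. \<Sum>\<beta><l. G (real \<alpha> / real m + real \<beta> / real l))"
proof -
  interpret periodic_fun_simple' G by standard (rule per)
  define \<phi> where "\<phi> = (\<lambda>(\<alpha>, \<beta>). (\<alpha> * l + \<beta> * m) mod (m * l))"
  have mod_m: "\<phi> (\<alpha>, \<beta>) mod m = (\<alpha> * l) mod m" and mod_l: "\<phi> (\<alpha>, \<beta>) mod l = (\<beta> * m) mod l" for \<alpha> \<beta>
    by (simp_all add: \<phi>_def mod_mod_cancel)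
  have inj: "inj_on \<phi> ({..<m} \<times> {..<l})"
  proof (rule inj_onI, clarify)
    fix \<alpha> \<beta> \<alpha>' \<beta>' assume a: "\<alpha> < m" "\<beta> < l" "\<alpha>' < m" "\<beta>' < l" "\<phi> (\<alpha>, \<beta>) = \<phi> (\<alpha>', \<beta>')"
    then have "[\<alpha> * l = \<alpha>' * l] (mod m)" "[\<beta> * m = \<beta>' * m] (mod l)"
      using mod_m mod_l by (metis cong_def)+
    then have "[\<alpha> = \<alpha>'] (mod m)" "[\<beta> = \<beta>'] (mod l)"
      using cop by (simp_all add: cong_mult_rcancel_nat coprime_commute)
    then show "\<alpha> = \<alpha>' \<and> \<beta> = \<beta>'" using a by (auto intro: cong_less_modulus_unique_nat)
  qed
  have img: "\<phi> ` ({..<m} \<times> {..<l}) = {..<m * l}"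
    using inj m l by (intro card_subset_eq) (auto simp: \<phi>_def card_image card_cartesian_product)
  have val: "G (real (\<phi> (\<alpha>, \<beta>)) / real (m * l)) = G (real \<alpha> / real m + real \<beta> / real l)" for \<alpha> \<beta>
  proof -
    define X where "X = \<alpha> * l + \<beta> * m"
    have "X = \<phi> (\<alpha>, \<beta>) + (m * l) * (X div (m * l))" by (simp add: \<phi>_def X_def)
    then have "real X / real (m * l) = real (\<phi> (\<alpha>, \<beta>)) / real (m * l) + real (X div (m * l))"
      using m l by (simp add: field_simps) (metis of_nat_add of_nat_mult)
    moreover have "real \<alpha> / real m + real \<beta> / real l = real X / real (m * l)"
      using m l by (simp add: X_def field_simps)
    ultimately show ?thesis by (simp add: plus_of_nat)
  qed
  have "(\<Sum>j<m * l. G (real j / real (m * l))) = (\<Sum>x\<in>{..<m} \<times> {..<l}. G (real (\<phi> x) / real (m * l)))"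
    unfolding img[symmetric] by (rule sum.reindex[OF inj, unfolded comp_def])
  also have "\<dots> = (\<Sum>\<alpha><m. \<Sum>\<beta><l. G (real \<alpha> / real m + real \<beta> / real l))"
    unfolding sum.cartesian_product by (intro sum.cong refl) (auto simp del: of_nat_mult simp: val)
  finally show ?thesis .
qed

lemma sum_below_prime_eq:
  fixes f :: "nat \<Rightarrow> 'a::field_char_0" and l :: nat
  assumes l: "prime l"
  shows "(1 / of_nat l) * (\<Sum>\<beta><l. f \<beta>) = (1 / of_nat l) * f 0 +
     (of_nat (l - 1) / of_nat l) * ((1 / of_nat (totient l)) * (\<Sum>j\<in>{j. j < l \<and> coprime j l}. f j))"
proof -
  have "l \<ge> 2" using prime_ge_2_nat[OF l] .
  have "{j. j < l \<and> coprime j l} = {..<l} - {0}"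
    using l \<open>l \<ge> 2\<close> by (auto simp: prime_nat_iff'' coprime_commute)
  moreover have "(\<Sum>\<beta><l. f \<beta>) = f 0 + (\<Sum>j\<in>{..<l} - {0}. f j)"
    using \<open>l \<ge> 2\<close> by (subst sum.remove[of _ 0]) auto
  moreover have "(of_nat (l - 1) :: 'a) \<noteq> 0" using \<open>l \<ge> 2\<close> by simp
  ultimately show ?thesis using \<open>l \<ge> 2\<close> by (simp add: totient_prime[OF l] field_simps)
qed

lemma delta_mult_prime:
  fixes m l :: nat and x y :: real
  assumes m: "m > 0" and l: "prime l" and cop: "coprime m l" and inv: "gamma_invariant f" and y: "y > 0"
  shows "delta (m * l) x y f = (1 / of_nat m) * (\<Sum>\<alpha><m. (1 / of_nat l) * f (Complex (x + real \<alpha> / real m) y)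
            + (of_nat (l - 1) / of_nat l) * delta_pr l (x + real \<alpha> / real m) y f)"
proof -
  define G where "G t = f (Complex (x + t) y)" for t
  have per: "G (t + 1) = G t" for t
    using gamma_invariant_horizontal_translate[OF inv y, of "x + t" 1] by (simp add: G_def add.assoc)
  have "delta (m * l) x y f = (1 / of_nat (m * l)) * (\<Sum>j<m * l. G (real j / real (m * l)))"
    by (simp add: delta_def G_def)
  also have "(\<Sum>j<m * l. G (real j / real (m * l))) = (\<Sum>\<alpha><m. \<Sum>\<beta><l. G (real \<alpha> / real m + real \<beta> / real l))"
    using per m prime_gt_0_nat[OF l] cop by (rule sum_periodic_mult_coprime)
  also have "(1 / of_nat (m * l)) * \<dots> = (1 / of_nat m) *
      (\<Sum>\<alpha><m. (1 / of_nat l) * (\<Sum>\<beta><l. f (Complex ((x + real \<alpha> / real m) + real \<beta> / real l) y)))"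
    by (simp add: sum_distrib_left G_def add.assoc)
  also have "\<dots> = (1 / of_nat m) * (\<Sum>\<alpha><m. (1 / of_nat l) * f (Complex (x + real \<alpha> / real m) y)
            + (of_nat (l - 1) / of_nat l) * delta_pr l (x + real \<alpha> / real m) y f)"
  proof -
    have "(1 / of_nat l) * (\<Sum>\<beta><l. f (Complex ((x + real \<alpha> / real m) + real \<beta> / real l) y))
        = (1 / of_nat l) * f (Complex (x + real \<alpha> / real m) y)
          + (of_nat (l - 1) / of_nat l) * delta_pr l (x + real \<alpha> / real m) y f" for \<alpha>
      using sum_below_prime_eq[OF l, of "\<lambda>\<beta>. f (Complex ((x + real \<alpha> / real m) + real \<beta> / real l) y)"]
      by (simp add: delta_pr_def)
    then show ?thesis by simp
  qed
  finally show ?thesis .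
qed

lemma Pm_cofactor:
  assumes "m > 0" "n \<in> Pm m"
  shows "prime (n div m)" "n = m * (n div m)" "coprime m (n div m)"
proof -
  obtain l where l: "n = m * l" "prime l" "\<not> l dvd m" using assms(2) by (auto simp: Pm_def)
  then have "n div m = l" using assms(1) by simp
  with l show "prime (n div m)" "n = m * (n div m)" "coprime m (n div m)"
    by (simp_all add: prime_imp_coprime coprime_commute)
qed

lemma filterlim_div_Pm:
  assumes m: "m > 0"
  shows "filterlim (\<lambda>n. n div m) (inf sequentially (principal {l. prime l \<and> B < l}))
           (inf sequentially (principal (Pm m)))"
  unfolding filterlim_inf filterlim_principal eventually_inf_principal
proof (intro conjI)
  have "filterlim (\<lambda>n. n div m) sequentially sequentially"
    unfolding filterlim_at_top
  proof
    fix Z :: nat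
    show "\<forall>\<^sub>F n in sequentially. Z \<le> n div m"
      using eventually_ge_at_top[of "Z * m"]
    proof eventually_elim
      case (elim n)
      then have "Z * m div m \<le> n div m" by (rule div_le_mono)
      then show ?case using m by simp
    qed
  qed
  then show "filterlim (\<lambda>n. n div m) sequentially (inf sequentially (principal (Pm m)))"
    by (rule filterlim_mono[OF _ order.refl inf_le1])
  show "\<forall>\<^sub>F n in sequentially. n \<in> Pm m \<longrightarrow> n div m \<in> {l. prime l \<and> B < l}"
    using eventually_ge_at_top[of "m * (B + 1)"]
  proof eventually_elim
    case (elim n)
    show ?case
    proof
      assume "n \<in> Pm m"
      note cofactor = Pm_cofactor[OF m this]
      have "m * (B + 1) \<le> n" by (rule elim)
      also have "n = m * (n div m)" by (rule cofactor(2))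
      finally have "0 < m \<longrightarrow> B + 1 \<le> n div m" by (simp only: mult_le_cancel1)
      with m cofactor(1) show "n div m \<in> {l. prime l \<and> B < l}" by simp
    qed
  qed
qed

lemma Nq_coprime_div_gcd:
  fixes q m :: nat
  assumes "m \<in> Nq q"
  shows "coprime (q div gcd m q) m"
proof (rule ccontr)
  have m: "m \<ge> 1" and Nq: "gcd (m ^ 2) q dvd m" using assms by (auto simp: Nq_def)
  define G where "G = gcd m q"
  define m' where "m' = m div G"
  define q' where "q' = q div G"
  have "G > 0" using m by (simp add: G_def)
  have mG: "m = G * m'" and qG: "q = G * q'" by (simp_all add: m'_def q'_def G_def)
  have "coprime m' q'" unfolding m'_def q'_def G_def using m by (intro div_gcd_coprime) auto
  assume "\<not> coprime (q div gcd m q) m"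
  then have "gcd q' m \<noteq> 1" unfolding q'_def G_def using coprime_iff_gcd_eq_1 by blast
  then obtain r where r: "prime r" "r dvd gcd q' m" using prime_factor_nat by blast
  then have "r dvd q'" "r dvd m" by simp_all
  have "\<not> r dvd m'"
  proof
    assume "r dvd m'"
    then have "is_unit r" by (rule coprime_common_divisor[OF \<open>coprime m' q'\<close> _ \<open>r dvd q'\<close>])
    with \<open>prime r\<close> show False by (simp add: not_prime_unit)
  qed
  then have "r dvd G" using \<open>r dvd m\<close> \<open>prime r\<close> mG by (simp add: prime_dvd_mult_iff)
  then have "G * r dvd m ^ 2" using mG by (simp add: power2_eq_square mult_dvd_mono)
  moreover have "G * r dvd q" using \<open>r dvd q'\<close> qG by simp
  ultimately have "G * r dvd G * m'" using Nq mG by (metis dvd_trans gcd_greatest)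
  then have "r dvd m'" using \<open>G > 0\<close> by simp
  with \<open>\<not> r dvd m'\<close> show False by contradiction
qed

lemma gcd_sum_fraction_numerator:
  fixes p :: int and q m \<alpha> :: nat
  assumes m: "m \<ge> 1" and pq: "coprime p (int q)"
  shows "gcd (p * int m + int \<alpha> * int q) (int q * int m)
         = int (gcd m q) * gcd (p * int (m div gcd m q) + int \<alpha> * int (q div gcd m q)) (int m)"
proof -
  define G where "G = gcd m q"
  define m' where "m' = m div G"
  define q' where "q' = q div G"
  have mG: "m = G * m'" and qG: "q = G * q'" by (simp_all add: m'_def q'_def G_def)
  have "coprime m' q'" unfolding m'_def q'_def G_def using m by (intro div_gcd_coprime) auto
  define X where "X = p * int m' + int \<alpha> * int q'"
  have num: "p * int m + int \<alpha> * int q = int G * X" and den: "int q * int m = int G * (int q' * int m)"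
    by (simp_all add: X_def mG qG algebra_simps)
  have "gcd (p * int m + int \<alpha> * int q) (int q * int m) = int G * gcd X (int q' * int m)"
    unfolding num den by (simp add: gcd_mult_distrib_int[symmetric])
  also have "gcd X (int q' * int m) = gcd X (int m)"
  proof (rule gcd_mult_right_left_cancel)
    have "coprime (p * int m') (int q')"
      using pq qG \<open>coprime m' q'\<close> by (simp add: coprime_commute)
    moreover have "[p * int m' = X] (mod int q')" by (simp add: X_def cong_iff_dvd_diff)
    ultimately show "coprime X (int q')" by (simp add: cong_imp_coprime)
  qed
  finally show ?thesis by (simp add: X_def G_def m'_def q'_def)
qed

lemma sum_gcd_eq_sum_divisors:
  fixes f :: "nat \<Rightarrow> 'a::comm_semiring_1" and m :: nat
  assumes m: "m > 0"
  shows "(\<Sum>\<beta><m. f (gcd \<beta> m)) = (\<Sum>d | d dvd m. of_nat (totient (m div d)) * f d)"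
proof -
  have "(\<Sum>\<beta><m. f (gcd \<beta> m)) = (\<Sum>\<beta>\<in>{0<..m}. f (gcd \<beta> m))"
  proof -
    have "(\<Sum>\<beta><m. f (gcd \<beta> m)) = f (gcd 0 m) + (\<Sum>\<beta>\<in>{1..<m}. f (gcd \<beta> m))"
      using m by (simp add: lessThan_atLeast0 sum.atLeast_Suc_lessThan)
    also have "\<dots> = (\<Sum>\<beta>\<in>insert m {1..<m}. f (gcd \<beta> m))" by (simp add: add.commute)
    also have "insert m {1..<m} = {0<..m}" using m by auto
    finally show ?thesis .
  qed
  also have "\<dots> = (\<Sum>d | d dvd m. \<Sum>\<beta>\<in>{\<beta>\<in>{0<..m}. gcd \<beta> m = d}. f (gcd \<beta> m))"
    using m by (intro sum.group[symmetric]) auto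
  also have "\<dots> = (\<Sum>d | d dvd m. of_nat (totient (m div d)) * f d)"
  proof (intro sum.cong refl)
    fix d assume "d \<in> {d. d dvd m}"
    then have "card {\<beta>\<in>{0<..m}. gcd \<beta> m = d} = totient (m div d)"
      using card_gcd_eq_totient m by blast
    moreover have "(\<Sum>\<beta>\<in>{\<beta>\<in>{0<..m}. gcd \<beta> m = d}. f (gcd \<beta> m))
        = of_nat (card {\<beta>\<in>{0<..m}. gcd \<beta> m = d}) * f d"
      by simp
    ultimately show "(\<Sum>\<beta>\<in>{\<beta>\<in>{0<..m}. gcd \<beta> m = d}. f (gcd \<beta> m)) = of_nat (totient (m div d)) * f d"
      by simp
  qed
  finally show ?thesis .
qed

lemma sum_gcd_affine_eq:
  fixes f :: "nat \<Rightarrow> 'a::comm_monoid_add" and m :: nat and P Q :: int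
  assumes m: "m > 0" and cop: "coprime Q (int m)"
  shows "(\<Sum>\<alpha><m. f (nat (gcd (P + int \<alpha> * Q) (int m)))) = (\<Sum>\<beta><m. f (gcd \<beta> m))"
proof -
  define \<sigma> where "\<sigma> \<alpha> = nat ((P + int \<alpha> * Q) mod int m)" for \<alpha>
  have "nat (gcd (P + int \<alpha> * Q) (int m)) = gcd (\<sigma> \<alpha>) m" for \<alpha>
  proof -
    have "gcd ((P + int \<alpha> * Q) mod int m) (int m) = gcd (P + int \<alpha> * Q) (int m)"
      by (rule cong_gcd_eq) (simp add: cong_def)
    moreover have "int (\<sigma> \<alpha>) = (P + int \<alpha> * Q) mod int m" using m by (simp add: \<sigma>_def)
    ultimately show ?thesis by (metis gcd_int_int_eq nat_int)
  qed
  then show ?thesis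
    using sum.reindex_bij_betw[OF bij_betw_affine_mod[OF assms, of P], of "\<lambda>\<beta>. f (gcd \<beta> m)"]
    by (simp add: \<sigma>_def)
qed

lemma sum_mu_gcd_eq_nu:
  fixes p :: int and q m :: nat and Y :: real
  assumes pq: "coprime p (int q)" and m: "m \<in> Nq q"
  shows "(1 / of_nat m) * (\<Sum>\<alpha><m. mu ((real_of_int (gcd (p * int m + int \<alpha> * int q) (int q * int m)))\<^sup>2 * Y) f)
         = nu m (real (gcd m q) ^ 2 * Y) f"
proof -
  have "m \<ge> 1" using m by (simp add: Nq_def)
  define G where "G = gcd m q"
  define g where "g d = mu ((real G * real d)\<^sup>2 * Y) f" for d
  have "real_of_int (gcd (p * int m + int \<alpha> * int q) (int q * int m))
      = real G * real (nat (gcd (p * int (m div G) + int \<alpha> * int (q div G)) (int m)))" for \<alpha>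
    using gcd_sum_fraction_numerator[OF \<open>m \<ge> 1\<close> pq, of \<alpha>] by (simp add: G_def)
  then have "(\<Sum>\<alpha><m. mu ((real_of_int (gcd (p * int m + int \<alpha> * int q) (int q * int m)))\<^sup>2 * Y) f)
      = (\<Sum>\<alpha><m. g (nat (gcd (p * int (m div G) + int \<alpha> * int (q div G)) (int m))))"
    by (simp add: g_def)
  also have "\<dots> = (\<Sum>\<beta><m. g (gcd \<beta> m))"
    using \<open>m \<ge> 1\<close> Nq_coprime_div_gcd[OF m] by (intro sum_gcd_affine_eq) (auto simp: G_def)
  also have "\<dots> = (\<Sum>d | d dvd m. of_nat (totient (m div d)) * g d)"
    using \<open>m \<ge> 1\<close> by (intro sum_gcd_eq_sum_divisors) auto
  finally show ?thesis
    by (simp add: nu_def g_def G_def power_mult_distrib mult_ac)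
qed

lemma reduced_fraction:
  fixes P Q :: int
  assumes "Q > 0"
  obtains a b where "b \<ge> 1" "coprime a (int b)" "of_int a / real b = of_int P / of_int Q"
    "int b * gcd P Q = Q"
proof -
  define g where "g = gcd P Q"
  have "g > 0" using assms by (simp add: g_def)
  define a where "a = P div g"
  define b where "b = nat (Q div g)"
  have P: "P = a * g" and Q: "Q = (Q div g) * g" by (simp_all add: a_def g_def)
  then have "Q div g > 0" using assms \<open>g > 0\<close> by (metis zero_less_mult_pos2)
  then have b: "int b = Q div g" "b \<ge> 1" by (simp_all add: b_def)
  have "coprime a (int b)"
    unfolding a_def b(1) g_def using assms by (intro div_gcd_coprime) auto
  moreover have "of_int a / real b = of_int P / of_int Q"
    using \<open>g > 0\<close> b(2) by (subst P, subst Q) (simp flip: b(1))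
  moreover have "int b * gcd P Q = Q" using Q b(1) by (simp add: g_def)
  ultimately show ?thesis using b(2) that by blast
qed

lemma tendsto_inverse_div_Pm:
  assumes m: "m > 0"
  shows "((\<lambda>n. 1 / real (n div m)) \<longlongrightarrow> 0) (inf sequentially (principal (Pm m)))"
proof -
  have "filterlim (\<lambda>n. n div m) sequentially (inf sequentially (principal (Pm m)))"
    using filterlim_mono[OF filterlim_div_Pm[OF m, of 0] inf_le1 order.refl] .
  from filterlim_compose[OF lim_inverse_n' this] show ?thesis by simp
qed

lemma delta_pr_div_Pm_tendsto:
  fixes a :: int and b m :: nat and c :: real
  assumes b: "b \<ge> 1" and ab: "coprime a (int b)" and c: "c > 0" and f: "Cc_smooth_M f" and m: "m > 0"
  shows "((\<lambda>n. delta_pr (n div m) (of_int a / real b) (c / real n ^ 2) f)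
          \<longlongrightarrow> mu (real m ^ 2 / (c * real b ^ 2)) f) (inf sequentially (principal (Pm m)))"
proof -
  have "filterlim (\<lambda>l. delta_pr l (of_int a / real b) ((c / real m ^ 2) / real l ^ 2) f)
      (nhds (mu (1 / ((c / real m ^ 2) * real b ^ 2)) f)) (inf sequentially (principal {l. prime l \<and> b < l}))"
  proof (rule tendsto_mono[OF _ delta_pr_rational_tendsto])
    show "inf sequentially (principal {l. prime l \<and> b < l}) \<le> inf sequentially (principal {l. coprime l b})"
    proof (rule inf_mono[OF order.refl], unfold principal_le_iff, rule subsetI)
      fix l assume "l \<in> {l. prime l \<and> b < l}"
      then have "prime l" "\<not> l dvd b" using b by (auto dest: dvd_imp_le)
      then show "l \<in> {l. coprime l b}" by (simp add: prime_imp_coprime)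
    qed
  qed (use b ab c f m in auto)
  from filterlim_compose[OF this filterlim_div_Pm[OF m]]
  have "((\<lambda>n. delta_pr (n div m) (of_int a / real b) ((c / real m ^ 2) / real (n div m) ^ 2) f)
      \<longlongrightarrow> mu (real m ^ 2 / (c * real b ^ 2)) f) (inf sequentially (principal (Pm m)))"
    using m by simp
  moreover have "\<forall>\<^sub>F n in inf sequentially (principal (Pm m)). (c / real m ^ 2) / real (n div m) ^ 2 = c / real n ^ 2"
    unfolding eventually_inf_principal
    by (intro always_eventually allI impI) (use Pm_cofactor(2)[OF m] in \<open>metis of_nat_mult power_mult_distrib divide_divide_eq_left\<close>)
  ultimately show ?thesis
    by (elim Lim_transform_eventually eventually_mono) (use c in simp)
qed

lemma Pm_residue_term_tendsto:
  fixes a :: int and b m :: nat and c :: real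
  assumes b: "b \<ge> 1" and ab: "coprime a (int b)" and c: "c > 0" and f: "Cc_smooth_M f" and m: "m > 0"
  shows "((\<lambda>n. (1 / of_nat (n div m)) * f (Complex (of_int a / real b) (c / real n ^ 2))
            + (of_nat (n div m - 1) / of_nat (n div m)) * delta_pr (n div m) (of_int a / real b) (c / real n ^ 2) f)
          \<longlongrightarrow> mu (real m ^ 2 / (c * real b ^ 2)) f) (inf sequentially (principal (Pm m)))"
proof -
  let ?F = "inf sequentially (principal (Pm m))"
  note inv0 = tendsto_inverse_div_Pm[OF m]
  obtain B where B: "\<And>z. z \<in> upper \<Longrightarrow> norm (f z) \<le> B" using Cc_smooth_M_bounded[OF f] by blast
  have "((\<lambda>n. (1 / of_nat (n div m)) * f (Complex (of_int a / real b) (c / real n ^ 2))) \<longlongrightarrow> 0) ?F"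
  proof (rule Lim_null_comparison[OF _ tendsto_mult_right_zero[OF inv0, of B]])
    show "\<forall>\<^sub>F n in ?F. norm ((1 / of_nat (n div m)) * f (Complex (of_int a / real b) (c / real n ^ 2)))
        \<le> B * (1 / real (n div m))"
      unfolding eventually_inf_principal using eventually_gt_at_top[of 0]
    proof eventually_elim
      case (elim n)
      then have "norm (f (Complex (of_int a / real b) (c / real n ^ 2))) \<le> B"
        using B c by (simp add: upper_def)
      then show ?case by (simp add: norm_mult norm_divide divide_right_mono mult.commute)
    qed
  qed
  moreover have "((\<lambda>n. of_nat (n div m - 1) / of_nat (n div m) :: complex) \<longlongrightarrow> 1) ?F"
  proof -
    have "((\<lambda>n. 1 - of_real (1 / real (n div m)) :: complex) \<longlongrightarrow> 1 - of_real 0) ?F"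
      by (intro tendsto_intros inv0)
    moreover have "\<forall>\<^sub>F n in ?F. 1 - of_real (1 / real (n div m)) = (of_nat (n div m - 1) / of_nat (n div m) :: complex)"
      using filterlim_div_Pm[OF m, of 0] unfolding filterlim_inf filterlim_principal
      by (auto elim!: eventually_mono simp: of_nat_diff field_simps)
    ultimately show ?thesis by (simp add: tendsto_cong)
  qed
  ultimately have "((\<lambda>n. (1 / of_nat (n div m)) * f (Complex (of_int a / real b) (c / real n ^ 2))
            + (of_nat (n div m - 1) / of_nat (n div m)) * delta_pr (n div m) (of_int a / real b) (c / real n ^ 2) f)
          \<longlongrightarrow> 0 + 1 * mu (real m ^ 2 / (c * real b ^ 2)) f) ?F"
    by (intro tendsto_add tendsto_mult delta_pr_div_Pm_tendsto[OF assms])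
  then show ?thesis by simp
qed

lemma Pm_translate_term_tendsto:
  fixes p :: int and q m \<alpha> :: nat and c :: real
  assumes q: "q \<ge> 1" and c: "c > 0" and f: "Cc_smooth_M f" and m: "m > 0"
  defines "x \<equiv> of_int p / real q + real \<alpha> / real m"
  shows "((\<lambda>n. (1 / of_nat (n div m)) * f (Complex x (c / real n ^ 2))
            + (of_nat (n div m - 1) / of_nat (n div m)) * delta_pr (n div m) x (c / real n ^ 2) f)
          \<longlongrightarrow> mu ((real_of_int (gcd (p * int m + int \<alpha> * int q) (int q * int m)))\<^sup>2 / (c * real q ^ 2)) f)
         (inf sequentially (principal (Pm m)))"
proof -
  define g where "g = gcd (p * int m + int \<alpha> * int q) (int q * int m)"
  have "int q * int m > 0" using q m by simp
  then obtain a b where "b \<ge> 1" "coprime a (int b)"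
    and ab: "of_int a / real b = of_int (p * int m + int \<alpha> * int q) / of_int (int q * int m)"
    and bg: "int b * g = int q * int m"
    unfolding g_def by (rule reduced_fraction)
  have "x = of_int a / real b"
    using ab q m by (simp add: x_def field_simps)
  moreover have "real m ^ 2 / (c * real b ^ 2) = (real_of_int g)\<^sup>2 / (c * real q ^ 2)"
  proof -
    have "real b * real_of_int g = real q * real m"
      using arg_cong[OF bg, of real_of_int] by simp
    then show ?thesis using q c \<open>b \<ge> 1\<close> by (simp add: field_simps power2_eq_square)
  qed
  ultimately show ?thesis
    using Pm_residue_term_tendsto[OF \<open>b \<ge> 1\<close> \<open>coprime a (int b)\<close> c f m] by (simp add: g_def)
qed

lemma delta_Pm_eq:
  assumes m: "m > 0" and n: "n \<in> Pm m" and inv: "gamma_invariant f" and y: "y > 0"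
  shows "delta n x y f = (1 / of_nat m) * (\<Sum>\<alpha><m. (1 / of_nat (n div m)) * f (Complex (x + real \<alpha> / real m) y)
            + (of_nat (n div m - 1) / of_nat (n div m)) * delta_pr (n div m) (x + real \<alpha> / real m) y f)"
proof -
  define l where "l = n div m"
  note cofactor = Pm_cofactor[OF m n, folded l_def]
  have "n = m * l" by (rule cofactor(2))
  then show ?thesis
    using delta_mult_prime[OF m cofactor(1,3) inv y] m by simp
qed

lemma delta_Pm_tendsto:
  fixes p :: int and q m :: nat and c :: real
  assumes q: "q \<ge> 1" and pq: "coprime p (int q)" and c: "c > 0" and f: "Cc_smooth_M f" and m: "m \<in> Nq q"
  shows "filterlim (\<lambda>n. delta n (of_int p / real q) (c / real n ^ 2) f)
            (nhds (nu m (real (gcd m q) ^ 2 / (c * real q ^ 2)) f)) (inf sequentially (principal (Pm m)))"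
proof -
  let ?F = "inf sequentially (principal (Pm m))"
  let ?x = "\<lambda>\<alpha>. of_int p / real q + real \<alpha> / real m"
  let ?E = "\<lambda>n. (1 / of_nat m) * (\<Sum>\<alpha><m. (1 / of_nat (n div m)) * f (Complex (?x \<alpha>) (c / real n ^ 2))
            + (of_nat (n div m - 1) / of_nat (n div m)) * delta_pr (n div m) (?x \<alpha>) (c / real n ^ 2) f)"
  let ?g = "\<lambda>\<alpha>. real_of_int (gcd (p * int m + int \<alpha> * int q) (int q * int m))"
  have "m > 0" using m by (simp add: Nq_def)
  have "(?E \<longlongrightarrow> (1 / of_nat m) * (\<Sum>\<alpha><m. mu ((?g \<alpha>)\<^sup>2 / (c * real q ^ 2)) f)) ?F"
    by (intro tendsto_mult tendsto_const tendsto_sum Pm_translate_term_tendsto q c f \<open>m > 0\<close>)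
  moreover have "\<forall>\<^sub>F n in ?F. ?E n = delta n (of_int p / real q) (c / real n ^ 2) f"
    unfolding eventually_inf_principal using eventually_gt_at_top[of 0]
  proof eventually_elim
    case (elim n)
    have "gamma_invariant f" using f by (simp add: Cc_smooth_M_def)
    with elim c show ?case using delta_Pm_eq[OF \<open>m > 0\<close>] by simp
  qed
  ultimately have "((\<lambda>n. delta n (of_int p / real q) (c / real n ^ 2) f)
      \<longlongrightarrow> (1 / of_nat m) * (\<Sum>\<alpha><m. mu ((?g \<alpha>)\<^sup>2 / (c * real q ^ 2)) f)) ?F"
    by (rule Lim_transform_eventually)
  moreover have "(1 / of_nat m) * (\<Sum>\<alpha><m. mu ((?g \<alpha>)\<^sup>2 / (c * real q ^ 2)) f)
      = nu m (real (gcd m q) ^ 2 / (c * real q ^ 2)) f"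
    using sum_mu_gcd_eq_nu[OF pq m, of "1 / (c * real q ^ 2)" f] by simp
  ultimately show ?thesis by simp
qed

theorem theorem1p3:
  fixes p :: int and q :: nat
  assumes "q \<ge> 1" and "coprime p (int q)"
  defines "x \<equiv> real_of_int p / real q"
  shows "(\<forall>c::real. c > 0 \<longrightarrow> (\<forall>\<Psi>. Cc_smooth_M \<Psi> \<longrightarrow>
            filterlim (\<lambda>n. delta_pr n x (c / real n ^ 2) \<Psi>)
               (nhds (mu (1 / (c * real q ^ 2)) \<Psi>))
               (inf sequentially (principal {n. coprime n q})) \<and>
            (\<forall>m \<in> Nq q.
               filterlim (\<lambda>n. delta n x (c / real n ^ 2) \<Psi>)
                 (nhds (nu m (real (gcd m q) ^ 2 / (c * real q ^ 2)) \<Psi>))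
                 (inf sequentially (principal (Pm m))))))
       \<and> (\<forall>y :: nat \<Rightarrow> real. (\<forall>n\<ge>1. y n > 0) \<longrightarrow>
            ((\<lambda>n. real n ^ 2 * y n) \<longlonglongrightarrow> 0) \<longrightarrow>
            escapes_to_cusp (\<lambda>n. Rn n x (y n)) \<and> escapes_to_cusp (\<lambda>n. Rn_pr n x (y n)))"
proof (intro conjI allI impI ballI)
  fix c :: real and \<Psi> assume c: "c > 0" and \<Psi>: "Cc_smooth_M \<Psi>"
  show "filterlim (\<lambda>n. delta_pr n x (c / real n ^ 2) \<Psi>) (nhds (mu (1 / (c * real q ^ 2)) \<Psi>))
      (inf sequentially (principal {n. coprime n q}))"
    unfolding x_def using assms(1,2) c \<Psi> by (intro delta_pr_rational_tendsto) auto
  fix m assume "m \<in> Nq q"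
  then show "filterlim (\<lambda>n. delta n x (c / real n ^ 2) \<Psi>)
      (nhds (nu m (real (gcd m q) ^ 2 / (c * real q ^ 2)) \<Psi>)) (inf sequentially (principal (Pm m)))"
    unfolding x_def by (rule delta_Pm_tendsto[OF assms(1,2) c \<Psi>])
next
  fix y :: "nat \<Rightarrow> real"
  assume "\<forall>n\<ge>1. y n > 0" "(\<lambda>n. real n ^ 2 * y n) \<longlonglongrightarrow> 0"
  then show R: "escapes_to_cusp (\<lambda>n. Rn n x (y n))"
    unfolding x_def by (rule escapes_to_cusp_Rn[OF assms(1)])
  show "escapes_to_cusp (\<lambda>n. Rn_pr n x (y n))"
    by (rule escapes_to_cusp_subset[OF R]) (auto simp: Rn_def Rn_pr_def)
qed

end
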